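(* Let $u=(u(i))_{i\in\mathbb{N}}$, $v=(v(i))_{i\in\mathbb{N}}$ be unitaries in $\ell^\infty(M_m(\mathbb{C}))$. (1) If $\lim_{i\to\infty}\|u(i)-v(i)\|=0$, then $\Phi^u(T)-\Phi^v(T)$ is compact for every $T\in\mathcal{B}(H)$. (2) For every partition $\vec E=\{E_n\}_{n\in\mathbb{N}}\in\mathrm{Part}_\mathbb{N}$, $\Phi^u(a)-\Phi^v(a)$ is compact for all $a\in\mathcal{D}[\vec E]$ if and only if $\limsup_n\Delta_{E_n}(u,v)=0$.
   Context: $H$ is a separable infinite-dimensional complex Hilbert space with fixed orthonormal basis $\{\xi_k\}_{k\in\mathbb{N}}$, $m\ge1$. A unitary $u=(u(i))_i$ of $\ell^\infty(M_m(\mathbb{C}))$ (a bounded sequence of unitary $m\times m$ matrices) acts on $H\otimes\mathbb{C}^m=\bigoplus_i(\xi_i\otimes\mathbb{C}^m)$ by acting as $u(i)$ on $\xi_i\otimes\mathbb{C}^m$; define $\Phi^u:\mathcal{B}(H)\to\mathcal{B}(H\otimes\mathbb{C}^m)$ by $\Phi^u(T)=u(T\otimes1_m)u^*$; compactness refers to $\mathcal{K}(H\otimes\mathbb{C}^m)$. For $I\subseteq\mathbb{N}$, $\Delta_I(u,v)=\sup_{i,j\in I}\|u(i)u(j)^*-v(i)v(j)^*\|$. $\mathrm{Part}_\mathbb{N}$ is the set of partitions $\vec E=\{E_n\}$ of $\mathbb{N}$ into consecutive finite intervals; $\mathcal{D}[\vec E]$ is the algebra of operators on $H$ commuting with every projection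 $P_{E_n}$ onto $\overline{\mathrm{span}}\{\xi_k:k\in E_n\}$. *)

theory Defs
  imports "HOL-Analysis.Analysis"
begin

text \<open>H = ell^2(nat) with basis xi_k = indicator of k; and
  H (x) C^m = ell^2(nat \<times> 'm) where the finite type 'm has CARD('m) = m elements.\<close>

definition l2 :: "('i \<Rightarrow> complex) set" where
  "l2 = {x. (\<lambda>i. (cmod (x i))\<^sup>2) summable_on UNIV}"

definition l2norm :: "('i \<Rightarrow> complex) \<Rightarrow> real" where
  "l2norm x = sqrt (\<Sum>\<^sub>\<infinity>i. (cmod (x i))\<^sup>2)"

text \<open>Bounded (complex-linear) operators on ell^2('i); only their values on l2 matter.\<close>
definition bounded_op :: "(('i \<Rightarrow> complex) \<Rightarrow> ('j \<Rightarrow> complex)) \<Rightarrow> bool" where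
  "bounded_op T \<longleftrightarrow>
     (\<forall>x\<in>l2. T x \<in> l2) \<and>
     (\<forall>x\<in>l2. \<forall>y\<in>l2. T (\<lambda>i. x i + y i) = (\<lambda>i. T x i + T y i)) \<and>
     (\<forall>x\<in>l2. \<forall>c. T (\<lambda>i. c * x i) = (\<lambda>i. c * T x i)) \<and>
     (\<exists>C. \<forall>x\<in>l2. l2norm (T x) \<le> C * l2norm x)"

text \<open>Compact operator: the image of the closed unit ball is totally bounded
  (equivalently relatively compact, ell^2 being complete).\<close>
definition compact_op :: "(('i \<Rightarrow> complex) \<Rightarrow> ('j \<Rightarrow> complex)) \<Rightarrow> bool" where
  "compact_op S \<longleftrightarrow>
     (\<forall>e>0. \<exists>F. finite F \<and> F \<subseteq> l2 \<and>
        (\<forall>x\<in>l2. l2norm x \<le> 1 \<longrightarrow> (\<exists>y\<in>F. l2norm (\<lambda>i. S x i - y i) \<le> e)))"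

definition cadj :: "complex^'m^'m \<Rightarrow> complex^'m^'m" where
  "cadj A = (\<chi> i j. cnj (A $ j $ i))"

definition unitary_mat :: "complex^'m^'m \<Rightarrow> bool" where
  "unitary_mat A \<longleftrightarrow> A ** cadj A = mat 1 \<and> cadj A ** A = mat 1"

definition mnorm :: "complex^'m^'m \<Rightarrow> real" where
  "mnorm A = onorm (\<lambda>x. A *v x)"

definition tens1 :: "((nat \<Rightarrow> complex) \<Rightarrow> (nat \<Rightarrow> complex))
    \<Rightarrow> ((nat \<times> 'm) \<Rightarrow> complex) \<Rightarrow> ((nat \<times> 'm) \<Rightarrow> complex)" where
  "tens1 T y = (\<lambda>(k, j). T (\<lambda>k'. y (k', j)) k)"

text \<open>Action of u = (u(i))_i in ell^infty(M_m(C)): acts as u(i) on xi_i \<otimes> C^m.\<close>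
definition diag_act :: "(nat \<Rightarrow> complex^'m^'m) \<Rightarrow> ((nat \<times> 'm) \<Rightarrow> complex) \<Rightarrow> ((nat \<times> 'm) \<Rightarrow> complex)" where
  "diag_act u y = (\<lambda>(i, j). (u i *v (\<chi> j'. y (i, j'))) $ j)"

definition Phi :: "(nat \<Rightarrow> complex^'m^'m) \<Rightarrow> ((nat \<Rightarrow> complex) \<Rightarrow> (nat \<Rightarrow> complex))
    \<Rightarrow> ((nat \<times> 'm) \<Rightarrow> complex) \<Rightarrow> ((nat \<times> 'm) \<Rightarrow> complex)" where
  "Phi u T = diag_act u \<circ> tens1 T \<circ> diag_act (\<lambda>i. cadj (u i))"

definition Delta :: "nat set \<Rightarrow> (nat \<Rightarrow> complex^'m^'m) \<Rightarrow> (nat \<Rightarrow> complex^'m^'m) \<Rightarrow> real" where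
  "Delta I u v = (SUP p\<in>I \<times> I. mnorm (u (fst p) ** cadj (u (snd p)) - v (fst p) ** cadj (v (snd p))))"

definition Part_N :: "(nat \<Rightarrow> nat set) set" where
  "Part_N = {E. \<exists>a. a 0 = 0 \<and> strict_mono a \<and> (\<forall>n. E n = {a n..<a (Suc n)})}"

definition proj :: "nat set \<Rightarrow> (nat \<Rightarrow> complex) \<Rightarrow> (nat \<Rightarrow> complex)" where
  "proj E x = (\<lambda>k. if k \<in> E then x k else 0)"

definition D_alg :: "(nat \<Rightarrow> nat set) \<Rightarrow> ((nat \<Rightarrow> complex) \<Rightarrow> (nat \<Rightarrow> complex)) set" where
  "D_alg E = {a. bounded_op a \<and> (\<forall>n. \<forall>x\<in>l2. a (proj (E n) x) = proj (E n) (a x))}"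

end

theory Submission
  imports Defs
begin

text \<open>Write \<open>\<Phi>\<^sup>u(T) - \<Phi>\<^sup>v(T) = (u - v)(T \<otimes> 1)u\<^sup>* + v(T \<otimes> 1)(u\<^sup>* - v\<^sup>*)\<close>.
  If \<open>\<parallel>u(i) - v(i)\<parallel> \<rightarrow> 0\<close>, the diagonal operators \<open>u - v\<close> and \<open>u\<^sup>* - v\<^sup>*\<close> are norm
  limits of their finite truncations, hence compact, and (1) follows.

  For (2), every \<open>a \<in> D[E]\<close> makes \<open>a \<otimes> 1\<close> commute with the diagonal operators that are
  constant on the blocks \<open>E\<^sub>n\<close>. Hence replacing \<open>u(i)\<close> by \<open>u(i)u(min E\<^sub>n)\<^sup>*\<close> for
  \<open>i \<in> E\<^sub>n\<close>, and likewise \<open>v\<close>, changes neither \<open>\<Phi>\<^sup>u(a)\<close> nor \<open>\<Phi>\<^sup>v(a)\<close>, while the new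
  sequences differ by at most \<open>\<Delta>\<^bsub>E\<^sub>n\<^esub>(u, v)\<close> on \<open>E\<^sub>n\<close>; so (1) gives the "if"
  direction. Conversely, if \<open>\<Delta>\<^bsub>E\<^sub>n\<^esub>(u, v) \<ge> \<epsilon>\<close> for infinitely many \<open>n\<close>, choose
  \<open>i\<^sub>n, j\<^sub>n \<in> E\<^sub>n\<close> attaining it and let \<open>a \<in> D[E]\<close> send \<open>\<xi>\<^bsub>j\<^sub>n\<^esub>\<close> to \<open>\<xi>\<^bsub>i\<^sub>n\<^esub>\<close>. Then
  \<open>\<Phi>\<^sup>u(a) - \<Phi>\<^sup>v(a)\<close> maps suitable unit vectors \<open>\<xi>\<^bsub>j\<^sub>n\<^esub> \<otimes> z\<^sub>n\<close> to vectors with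
  disjoint supports and norms \<open>> \<epsilon>/2\<close>, so it is not compact.\<close>

section \<open>Square-summable functions\<close>

definition l2sq :: "('i \<Rightarrow> complex) \<Rightarrow> real" where
  "l2sq x = (\<Sum>\<^sub>\<infinity>i. (cmod (x i))\<^sup>2)"

lemma l2sq_nonneg: "l2sq x \<ge> 0"
  unfolding l2sq_def by (rule infsum_nonneg) auto

lemma l2norm_eq_sqrt_l2sq: "l2norm x = sqrt (l2sq x)"
  by (simp add: l2norm_def l2sq_def)

lemma l2norm_nonneg: "l2norm x \<ge> 0"
  by (simp add: l2norm_eq_sqrt_l2sq l2sq_nonneg)

lemma l2norm_power2: "(l2norm x)\<^sup>2 = l2sq x"
  by (simp add: l2norm_eq_sqrt_l2sq l2sq_nonneg)

lemma l2_by_finite_sums: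
  assumes "\<And>F. finite F \<Longrightarrow> (\<Sum>i\<in>F. (cmod (x i))\<^sup>2) \<le> B"
  shows "x \<in> l2" "l2sq x \<le> B"
proof -
  have summable: "(\<lambda>i. (cmod (x i))\<^sup>2) summable_on UNIV"
    by (rule nonneg_bdd_above_summable_on) (auto intro!: bdd_aboveI[where M=B] assms)
  then show "x \<in> l2" by (simp add: l2_def)
  show "l2sq x \<le> B" unfolding l2sq_def
    by (rule infsum_le_finite_sums[OF summable]) (use assms in auto)
qed

lemma l2norm_le_by_finite_sums:
  assumes "\<And>F. finite F \<Longrightarrow> (\<Sum>i\<in>F. (cmod (x i))\<^sup>2) \<le> B\<^sup>2" "B \<ge> 0"
  shows "x \<in> l2" "l2norm x \<le> B"
  using l2_by_finite_sums[OF assms(1)] assms(2)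
  by (auto simp: l2norm_eq_sqrt_l2sq intro: real_le_lsqrt)

lemma sum_le_l2sq:
  assumes "x \<in> l2" "finite F"
  shows "(\<Sum>i\<in>F. (cmod (x i))\<^sup>2) \<le> l2sq x"
  unfolding l2sq_def
  by (rule finite_sum_le_infsum) (use assms in \<open>auto simp: l2_def\<close>)

lemma L2_set_le_l2norm:
  assumes "x \<in> l2" "finite F"
  shows "L2_set (\<lambda>i. cmod (x i)) F \<le> l2norm x"
  using sum_le_l2sq[OF assms] unfolding L2_set_def l2norm_eq_sqrt_l2sq by simp

lemma norm_le_l2norm:
  assumes "x \<in> l2"
  shows "cmod (x k) \<le> l2norm x"
  using L2_set_le_l2norm[OF assms, of "{k}"] by simp

lemma l2_add:
  assumes "x \<in> l2" "y \<in> l2"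
  shows "(\<lambda>i. x i + y i) \<in> l2" "l2norm (\<lambda>i. x i + y i) \<le> l2norm x + l2norm y"
proof -
  have sums: "(\<Sum>i\<in>F. (cmod (x i + y i))\<^sup>2) \<le> (l2norm x + l2norm y)\<^sup>2" if "finite F" for F
  proof -
    have "L2_set (\<lambda>i. cmod (x i + y i)) F \<le> L2_set (\<lambda>i. cmod (x i) + cmod (y i)) F"
      by (rule L2_set_mono) (auto simp: norm_triangle_ineq)
    also have "\<dots> \<le> L2_set (\<lambda>i. cmod (x i)) F + L2_set (\<lambda>i. cmod (y i)) F"
      by (rule L2_set_triangle_ineq)
    also have "\<dots> \<le> l2norm x + l2norm y"
      using L2_set_le_l2norm[OF assms(1) that] L2_set_le_l2norm[OF assms(2) that] by simp
    finally have "(L2_set (\<lambda>i. cmod (x i + y i)) F)\<^sup>2 \<le> (l2norm x + l2norm y)\<^sup>2"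
      by (rule power_mono) (rule L2_set_nonneg)
    then show ?thesis by (simp add: L2_set_def sum_nonneg)
  qed
  have "l2norm x + l2norm y \<ge> 0" using l2norm_nonneg[of x] l2norm_nonneg[of y] by simp
  with sums show "(\<lambda>i. x i + y i) \<in> l2" "l2norm (\<lambda>i. x i + y i) \<le> l2norm x + l2norm y"
    by (blast intro: l2norm_le_by_finite_sums)+
qed

lemma l2_scale:
  assumes "x \<in> l2"
  shows "(\<lambda>i. c * x i) \<in> l2" "l2norm (\<lambda>i. c * x i) = cmod c * l2norm x"
proof -
  have "(\<lambda>i. (cmod c)\<^sup>2 * (cmod (x i))\<^sup>2) summable_on UNIV"
    using assms by (auto simp: l2_def intro: summable_on_cmult_right)
  then show "(\<lambda>i. c * x i) \<in> l2" by (simp add: l2_def norm_mult power_mult_distrib)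
  show "l2norm (\<lambda>i. c * x i) = cmod c * l2norm x"
    by (simp add: l2norm_def norm_mult power_mult_distrib infsum_cmult_right' real_sqrt_mult)
qed

lemma l2_diff:
  assumes "x \<in> l2" "y \<in> l2"
  shows "(\<lambda>i. x i - y i) \<in> l2" "l2norm (\<lambda>i. x i - y i) \<le> l2norm x + l2norm y"
  using l2_add[OF assms(1) l2_scale(1)[OF assms(2), of "-1"]] l2_scale(2)[OF assms(2), of "-1"]
  by auto

lemma l2norm_diff_triangle:
  assumes "x \<in> l2" "y \<in> l2" "z \<in> l2"
  shows "l2norm (\<lambda>i. x i - z i) \<le> l2norm (\<lambda>i. x i - y i) + l2norm (\<lambda>i. y i - z i)"
  using l2_add(2)[OF l2_diff(1)[OF assms(1,2)] l2_diff(1)[OF assms(2,3)]] by simp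

lemma l2norm_diff_commute: "l2norm (\<lambda>i. x i - y i) = l2norm (\<lambda>i. y i - x i)"
  unfolding l2norm_def by (simp add: norm_minus_commute)

lemma l2_finite_support:
  assumes "finite A" "\<And>i. i \<notin> A \<Longrightarrow> x i = 0"
  shows "x \<in> l2" "l2sq x = (\<Sum>i\<in>A. (cmod (x i))\<^sup>2)"
proof -
  have "l2sq x = infsum (\<lambda>i. (cmod (x i))\<^sup>2) A" unfolding l2sq_def
    by (rule infsum_cong_neutral) (auto simp: assms)
  then show "l2sq x = (\<Sum>i\<in>A. (cmod (x i))\<^sup>2)" using assms by simp
  have "(\<Sum>i\<in>F. (cmod (x i))\<^sup>2) \<le> (\<Sum>i\<in>A. (cmod (x i))\<^sup>2)" if "finite F" for F
  proof -
    have "(\<Sum>i\<in>F. (cmod (x i))\<^sup>2) \<le> (\<Sum>i\<in>F \<union> A. (cmod (x i))\<^sup>2)"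
      by (rule sum_mono2) (use that assms in auto)
    also have "\<dots> = (\<Sum>i\<in>A. (cmod (x i))\<^sup>2)"
      by (rule sum.mono_neutral_right) (use that assms in auto)
    finally show ?thesis .
  qed
  then show "x \<in> l2" using l2_by_finite_sums by blast
qed

lemma l2norm_finite_support_le:
  assumes "finite A" "\<And>i. i \<notin> A \<Longrightarrow> x i = 0" "\<And>i. cmod (x i) \<le> b"
  shows "l2norm x \<le> real (card A) * b"
proof -
  have "l2norm x = L2_set (\<lambda>i. cmod (x i)) A"
    using l2_finite_support(2)[OF assms(1,2)] by (simp add: l2norm_eq_sqrt_l2sq L2_set_def)
  also have "\<dots> \<le> (\<Sum>i\<in>A. cmod (x i))" by (rule L2_set_le_sum) simp
  also have "\<dots> \<le> (\<Sum>i\<in>A. b)" by (rule sum_mono) (rule assms(3))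
  finally show ?thesis by simp
qed

lemma l2_sum:
  assumes "finite L" "\<And>l. l \<in> L \<Longrightarrow> f l \<in> l2"
  shows "(\<lambda>k. \<Sum>l\<in>L. c l * f l k) \<in> l2"
  using assms
proof (induction L rule: finite_induct)
  case empty
  then show ?case by (simp add: l2_def)
next
  case (insert l0 L)
  have "(\<lambda>k. c l0 * f l0 k) \<in> l2" by (rule l2_scale(1)) (simp add: insert.prems)
  from l2_add(1)[OF this insert.IH] show ?case using insert by simp
qed

section \<open>Bounded and compact operators\<close>

lemma bounded_op_l2: "bounded_op B \<Longrightarrow> x \<in> l2 \<Longrightarrow> B x \<in> l2"
  unfolding bounded_op_def by blast

lemma bounded_op_add:
  "bounded_op B \<Longrightarrow> x \<in> l2 \<Longrightarrow> y \<in> l2 \<Longrightarrow> B (\<lambda>i. x i + y i) = (\<lambda>i. B x i + B y i)"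
  unfolding bounded_op_def by blast

lemma bounded_op_scale: "bounded_op B \<Longrightarrow> x \<in> l2 \<Longrightarrow> B (\<lambda>i. c * x i) = (\<lambda>i. c * B x i)"
  unfolding bounded_op_def by blast

lemma bounded_op_diff:
  assumes "bounded_op B" "x \<in> l2" "y \<in> l2"
  shows "B (\<lambda>i. x i - y i) = (\<lambda>i. B x i - B y i)"
  using bounded_op_add[OF assms(1,2) l2_scale(1)[OF assms(3), of "-1"]]
    bounded_op_scale[OF assms(1,3), of "-1"]
  by simp

lemma bounded_op_normE:
  assumes "bounded_op B"
  obtains C where "C > 0" "\<And>x. x \<in> l2 \<Longrightarrow> l2norm (B x) \<le> C * l2norm x"
proof -
  obtain C where C: "\<And>x. x \<in> l2 \<Longrightarrow> l2norm (B x) \<le> C * l2norm x"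
    using assms unfolding bounded_op_def by blast
  have "l2norm (B x) \<le> (\<bar>C\<bar> + 1) * l2norm x" if "x \<in> l2" for x
    using C[OF that] mult_right_mono[of C "\<bar>C\<bar> + 1" "l2norm x"] l2norm_nonneg[of x] by linarith
  then show ?thesis using that[of "\<bar>C\<bar> + 1"] by simp
qed

lemma bounded_op_sum:
  assumes B: "bounded_op B" and "finite L" "\<And>l. l \<in> L \<Longrightarrow> f l \<in> l2"
  shows "B (\<lambda>k. \<Sum>l\<in>L. c l * f l k) = (\<lambda>k. \<Sum>l\<in>L. c l * B (f l) k)"
  using assms(2,3)
proof (induction L rule: finite_induct)
  case empty
  have "(\<lambda>_. 0) \<in> l2" by (simp add: l2_def)
  then show ?case using bounded_op_scale[OF B, of "\<lambda>_. 0" 0] by simp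
next
  case (insert l0 L)
  have "(\<lambda>k. c l0 * f l0 k) \<in> l2" by (rule l2_scale(1)) (simp add: insert.prems)
  moreover have "(\<lambda>k. \<Sum>l\<in>L. c l * f l k) \<in> l2" by (rule l2_sum) (simp_all add: insert)
  ultimately show ?case
    using bounded_op_add[OF B] bounded_op_scale[OF B, of "f l0" "c l0"] insert by simp
qed

lemma bounded_op_comp:
  assumes A: "bounded_op A" and B: "bounded_op B"
  shows "bounded_op (\<lambda>x. A (B x))"
proof -
  obtain C1 where C1: "C1 > 0" "\<And>x. x \<in> l2 \<Longrightarrow> l2norm (A x) \<le> C1 * l2norm x"
    using bounded_op_normE[OF A] by blast
  obtain C2 where C2: "\<And>x. x \<in> l2 \<Longrightarrow> l2norm (B x) \<le> C2 * l2norm x"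
    using bounded_op_normE[OF B] by blast
  have "l2norm (A (B x)) \<le> (C1 * C2) * l2norm x" if "x \<in> l2" for x
  proof -
    have "l2norm (A (B x)) \<le> C1 * l2norm (B x)" by (rule C1(2)[OF bounded_op_l2[OF B that]])
    also have "\<dots> \<le> C1 * (C2 * l2norm x)" by (rule mult_left_mono[OF C2[OF that]]) (use C1 in simp)
    finally show ?thesis by (simp add: mult.assoc)
  qed
  then show ?thesis
    using A B unfolding bounded_op_def by (auto 0 3 intro: exI[of _ "C1 * C2"])
qed

lemma bounded_op_id: "bounded_op (\<lambda>x. x)"
  unfolding bounded_op_def by (auto intro!: exI[of _ 1])

lemma compact_op_cong:
  assumes "compact_op S" "\<And>x. x \<in> l2 \<Longrightarrow> S x = S' x"
  shows "compact_op S'"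
  using assms unfolding compact_op_def by metis

lemma abs_sub_floor_divide_le:
  fixes t h :: real
  assumes "h > 0"
  shows "\<bar>t - h * of_int \<lfloor>t / h\<rfloor>\<bar> \<le> h"
proof -
  define k where "k = (of_int \<lfloor>t / h\<rfloor> :: real)"
  have "k \<le> t / h" "t / h < k + 1" unfolding k_def by simp_all
  then have "k * h \<le> t" "t < (k + 1) * h"
    using assms by (simp_all add: pos_le_divide_eq pos_divide_less_eq)
  then show ?thesis unfolding k_def[symmetric] by (simp add: abs_le_iff algebra_simps)
qed

lemma floor_divide_mem_range:
  fixes t h R :: real
  assumes "h > 0" "\<bar>t\<bar> \<le> R"
  shows "\<lfloor>t / h\<rfloor> \<in> {-\<lceil>R / h\<rceil>..\<lceil>R / h\<rceil>}"
proof -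
  have "-R \<le> t" "t \<le> R" using assms(2) by (simp_all add: abs_le_iff)
  then have "(-R) / h \<le> t / h" "t / h \<le> R / h"
    using assms(1) by (simp_all only: divide_right_mono less_imp_le)
  then have "\<lfloor>(-R) / h\<rfloor> \<le> \<lfloor>t / h\<rfloor>" "\<lfloor>t / h\<rfloor> \<le> \<lceil>R / h\<rceil>"
    using floor_mono order_trans[OF floor_mono floor_le_ceiling] by blast+
  then show ?thesis by (simp add: floor_minus)
qed

lemma cmod_sub_round_le:
  assumes "h > 0"
  shows "cmod (z - complex_of_real h * (of_int \<lfloor>Re z / h\<rfloor> + \<i> * of_int \<lfloor>Im z / h\<rfloor>)) \<le> 2 * h"
    (is "cmod (z - ?r) \<le> _")
proof -
  have "Re (z - ?r) = Re z - h * of_int \<lfloor>Re z / h\<rfloor>" "Im (z - ?r) = Im z - h * of_int \<lfloor>Im z / h\<rfloor>"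
    by simp_all
  then show ?thesis
    using cmod_le[of "z - ?r"] abs_sub_floor_divide_le[OF assms, of "Re z"]
      abs_sub_floor_divide_le[OF assms, of "Im z"]
    by linarith
qed

lemma finite_grid_net:
  fixes A :: "'i set"
  assumes "finite A" "h > 0"
  obtains G where "finite G" "G \<subseteq> l2"
    "\<And>x. (\<And>i. i \<notin> A \<Longrightarrow> x i = 0) \<Longrightarrow> (\<And>i. cmod (x i) \<le> R) \<Longrightarrow>
       \<exists>g\<in>G. (\<forall>i. i \<notin> A \<longrightarrow> g i = 0) \<and> (\<forall>i. cmod (x i - g i) \<le> 2 * h)"
proof -
  define round where "round z = complex_of_real h * (of_int \<lfloor>Re z / h\<rfloor> + \<i> * of_int \<lfloor>Im z / h\<rfloor>)" for z
  define K where "K = \<lceil>R / h\<rceil>"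
  define lattice where
    "lattice = (\<lambda>(a, b). complex_of_real h * (of_int a + \<i> * of_int b)) ` ({-K..K} \<times> {-K..K})"
  define G :: "('i \<Rightarrow> complex) set"
    where "G = {g. \<forall>i. (i \<in> A \<longrightarrow> g i \<in> lattice) \<and> (i \<notin> A \<longrightarrow> g i = 0)}"
  have "finite G"
    unfolding G_def by (rule finite_set_of_finite_funs[OF assms(1)]) (simp add: lattice_def)
  moreover have "G \<subseteq> l2"
    unfolding G_def using l2_finite_support(1)[OF assms(1)] by blast
  moreover have "\<exists>g\<in>G. (\<forall>i. i \<notin> A \<longrightarrow> g i = 0) \<and> (\<forall>i. cmod (x i - g i) \<le> 2 * h)"
    if x0: "\<And>i. i \<notin> A \<Longrightarrow> x i = 0" and xR: "\<And>i. cmod (x i) \<le> R" for x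
  proof -
    define g where "g i = (if i \<in> A then round (x i) else 0)" for i
    have "round (x i) \<in> lattice" for i
    proof -
      have "\<bar>Re (x i)\<bar> \<le> R" "\<bar>Im (x i)\<bar> \<le> R"
        using xR[of i] abs_Re_le_cmod[of "x i"] abs_Im_le_cmod[of "x i"] by linarith+
      then have "(\<lfloor>Re (x i) / h\<rfloor>, \<lfloor>Im (x i) / h\<rfloor>) \<in> {-K..K} \<times> {-K..K}"
        unfolding K_def using floor_divide_mem_range[OF assms(2)] by blast
      then show ?thesis unfolding lattice_def round_def by (rule rev_image_eqI) simp
    qed
    then have "g \<in> G" unfolding G_def g_def by simp
    moreover have "cmod (x i - g i) \<le> 2 * h" for i
      using cmod_sub_round_le[OF assms(2), of "x i"] x0[of i] assms(2) unfolding g_def round_def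
      by (cases "i \<in> A") auto
    moreover have "\<forall>i. i \<notin> A \<longrightarrow> g i = 0" by (simp add: g_def)
    ultimately show ?thesis by blast
  qed
  ultimately show ?thesis using that by blast
qed

lemma finite_support_net:
  fixes A :: "'i set"
  assumes "finite A" "e > 0"
  obtains F where "finite F" "F \<subseteq> l2"
    "\<And>x. (\<And>i. i \<notin> A \<Longrightarrow> x i = 0) \<Longrightarrow> (\<And>i. cmod (x i) \<le> R) \<Longrightarrow>
       \<exists>g\<in>F. g \<in> l2 \<and> l2norm (\<lambda>i. x i - g i) \<le> e"
proof -
  define c where "c = real (card A)"
  define h where "h = e / (2 * (c + 1))"
  have "h > 0" using assms(2) by (simp add: h_def c_def)
  have ch: "c * (2 * h) \<le> e"
    using assms(2) by (simp add: h_def c_def field_simps)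
  obtain G where G: "finite G" "G \<subseteq> l2"
    "\<And>x. (\<And>i. i \<notin> A \<Longrightarrow> x i = 0) \<Longrightarrow> (\<And>i. cmod (x i) \<le> R) \<Longrightarrow>
       \<exists>g\<in>G. (\<forall>i. i \<notin> A \<longrightarrow> g i = 0) \<and> (\<forall>i. cmod (x i - g i) \<le> 2 * h)"
    using finite_grid_net[OF assms(1) \<open>h > 0\<close>] by metis
  have "\<exists>g\<in>G. g \<in> l2 \<and> l2norm (\<lambda>i. x i - g i) \<le> e"
    if x0: "\<And>i. i \<notin> A \<Longrightarrow> x i = 0" and xR: "\<And>i. cmod (x i) \<le> R" for x
  proof -
    obtain g where g: "g \<in> G" "\<forall>i. i \<notin> A \<longrightarrow> g i = 0" "\<forall>i. cmod (x i - g i) \<le> 2 * h"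
      using G(3)[of x, OF x0 xR] by blast
    have "l2norm (\<lambda>i. x i - g i) \<le> c * (2 * h)"
      unfolding c_def by (rule l2norm_finite_support_le[OF assms(1)]) (use x0 g in auto)
    then show ?thesis using g(1) G(2) ch by auto
  qed
  then show ?thesis using that G(1,2) by blast
qed

lemma compact_op_if_small_tails:
  assumes maps: "\<And>x. x \<in> l2 \<Longrightarrow> S x \<in> l2"
    and bounded: "\<And>x. x \<in> l2 \<Longrightarrow> l2norm x \<le> 1 \<Longrightarrow> l2norm (S x) \<le> R"
    and tails: "\<And>e. e > 0 \<Longrightarrow> \<exists>A. finite A \<and>
      (\<forall>x\<in>l2. l2norm x \<le> 1 \<longrightarrow> l2norm (\<lambda>i. if i \<in> A then 0 else S x i) \<le> e)"
  shows "compact_op S"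
  unfolding compact_op_def
proof (intro allI impI)
  fix e :: real assume "e > 0"
  then obtain A where A: "finite A"
    "\<forall>x\<in>l2. l2norm x \<le> 1 \<longrightarrow> l2norm (\<lambda>i. if i \<in> A then 0 else S x i) \<le> e / 2"
    using tails[of "e / 2"] by auto
  obtain F where F: "finite F" "F \<subseteq> l2"
    "\<And>x. (\<And>i. i \<notin> A \<Longrightarrow> x i = 0) \<Longrightarrow> (\<And>i. cmod (x i) \<le> R) \<Longrightarrow>
       \<exists>g\<in>F. g \<in> l2 \<and> l2norm (\<lambda>i. x i - g i) \<le> e / 2"
    using finite_support_net[OF A(1), where e="e / 2" and R=R] \<open>e > 0\<close> by (metis half_gt_zero)
  have "\<exists>g\<in>F. l2norm (\<lambda>i. S x i - g i) \<le> e" if x: "x \<in> l2" "l2norm x \<le> 1" for x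
  proof -
    define z where "z i = (if i \<in> A then S x i else 0)" for i
    have "S x \<in> l2" using maps x by simp
    have "cmod (z i) \<le> R" for i
      using norm_le_l2norm[OF \<open>S x \<in> l2\<close>, of i] bounded[OF x] l2norm_nonneg[of "S x"]
      unfolding z_def by (cases "i \<in> A") auto
    then obtain g where g: "g \<in> F" "g \<in> l2" "l2norm (\<lambda>i. z i - g i) \<le> e / 2"
      using F(3)[of z] unfolding z_def by auto
    have "z \<in> l2" using l2_finite_support(1)[OF A(1), of z] by (simp add: z_def)
    have "l2norm (\<lambda>i. S x i - z i) = l2norm (\<lambda>i. if i \<in> A then 0 else S x i)"
      unfolding z_def by (rule arg_cong[where f=l2norm]) auto
    then have "l2norm (\<lambda>i. S x i - z i) \<le> e / 2" using A(2) x by simp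
    then show ?thesis
      using l2norm_diff_triangle[OF \<open>S x \<in> l2\<close> \<open>z \<in> l2\<close> \<open>g \<in> l2\<close>] g by (auto intro: bexI[OF _ g(1)])
  qed
  then show "\<exists>F. finite F \<and> F \<subseteq> l2 \<and> (\<forall>x\<in>l2. l2norm x \<le> 1 \<longrightarrow>
      (\<exists>y\<in>F. l2norm (\<lambda>i. S x i - y i) \<le> e))"
    using F(1,2) by blast
qed

lemma compact_op_bounded_comp:
  assumes K: "compact_op K" "\<And>x. x \<in> l2 \<Longrightarrow> K x \<in> l2" and B: "bounded_op B"
  shows "compact_op (\<lambda>x. B (K x))"
  unfolding compact_op_def
proof (intro allI impI)
  fix e :: real assume "e > 0"
  obtain C where "C > 0" and C: "\<And>x. x \<in> l2 \<Longrightarrow> l2norm (B x) \<le> C * l2norm x"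
    using bounded_op_normE[OF B] by blast
  obtain F where F: "finite F" "F \<subseteq> l2"
    "\<forall>x\<in>l2. l2norm x \<le> 1 \<longrightarrow> (\<exists>y\<in>F. l2norm (\<lambda>i. K x i - y i) \<le> e / C)"
    using K(1)[unfolded compact_op_def, rule_format, of "e / C"] \<open>e > 0\<close> \<open>C > 0\<close> by auto
  have "\<exists>y\<in>B ` F. l2norm (\<lambda>i. B (K x) i - y i) \<le> e" if x: "x \<in> l2" "l2norm x \<le> 1" for x
  proof -
    obtain y where y: "y \<in> F" "l2norm (\<lambda>i. K x i - y i) \<le> e / C" using F(3) x by blast
    have "y \<in> l2" "K x \<in> l2" using y(1) F(2) K(2) x by auto
    then have "l2norm (\<lambda>i. B (K x) i - B y i) = l2norm (B (\<lambda>i. K x i - y i))"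
      by (simp add: bounded_op_diff[OF B])
    also have "\<dots> \<le> C * l2norm (\<lambda>i. K x i - y i)"
      by (rule C) (rule l2_diff(1)[OF \<open>K x \<in> l2\<close> \<open>y \<in> l2\<close>])
    also have "\<dots> \<le> C * (e / C)" by (rule mult_left_mono[OF y(2)]) (use \<open>C > 0\<close> in simp)
    finally show ?thesis using y(1) \<open>C > 0\<close> by auto
  qed
  moreover have "B ` F \<subseteq> l2" using F(2) bounded_op_l2[OF B] by blast
  ultimately show "\<exists>F'. finite F' \<and> F' \<subseteq> l2 \<and> (\<forall>x\<in>l2. l2norm x \<le> 1 \<longrightarrow>
      (\<exists>y\<in>F'. l2norm (\<lambda>i. B (K x) i - y i) \<le> e))"
    using F(1) by blast
qed

lemma compact_op_add:
  assumes K1: "compact_op K1" "\<And>x. x \<in> l2 \<Longrightarrow> K1 x \<in> l2"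
    and K2: "compact_op K2" "\<And>x. x \<in> l2 \<Longrightarrow> K2 x \<in> l2"
  shows "compact_op (\<lambda>x i. K1 x i + K2 x i)"
  unfolding compact_op_def
proof (intro allI impI)
  fix e :: real assume "e > 0"
  obtain F1 where F1: "finite F1" "F1 \<subseteq> l2"
    "\<forall>x\<in>l2. l2norm x \<le> 1 \<longrightarrow> (\<exists>y\<in>F1. l2norm (\<lambda>i. K1 x i - y i) \<le> e / 2)"
    using K1(1)[unfolded compact_op_def, rule_format, of "e / 2"] \<open>e > 0\<close> by auto
  obtain F2 where F2: "finite F2" "F2 \<subseteq> l2"
    "\<forall>x\<in>l2. l2norm x \<le> 1 \<longrightarrow> (\<exists>y\<in>F2. l2norm (\<lambda>i. K2 x i - y i) \<le> e / 2)"
    using K2(1)[unfolded compact_op_def, rule_format, of "e / 2"] \<open>e > 0\<close> by auto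
  define F where "F = (\<lambda>(y1, y2) i. y1 i + y2 i) ` (F1 \<times> F2)"
  have "\<exists>y\<in>F. l2norm (\<lambda>i. (K1 x i + K2 x i) - y i) \<le> e" if x: "x \<in> l2" "l2norm x \<le> 1" for x
  proof -
    obtain y1 where y1: "y1 \<in> F1" "l2norm (\<lambda>i. K1 x i - y1 i) \<le> e / 2" using F1(3) x by blast
    obtain y2 where y2: "y2 \<in> F2" "l2norm (\<lambda>i. K2 x i - y2 i) \<le> e / 2" using F2(3) x by blast
    have "(\<lambda>i. K1 x i - y1 i) \<in> l2" "(\<lambda>i. K2 x i - y2 i) \<in> l2"
      using l2_diff(1)[OF K1(2)[OF x(1)]] l2_diff(1)[OF K2(2)[OF x(1)]] y1(1) y2(1) F1(2) F2(2)
      by auto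
    from l2_add(2)[OF this]
    have "l2norm (\<lambda>i. (K1 x i + K2 x i) - (y1 i + y2 i)) \<le> e"
      using y1(2) y2(2) by (simp add: algebra_simps)
    then show ?thesis unfolding F_def using y1(1) y2(1) by force
  qed
  moreover have "finite F" "F \<subseteq> l2" unfolding F_def using F1(1,2) F2(1,2) by (auto intro!: l2_add(1))
  ultimately show "\<exists>F. finite F \<and> F \<subseteq> l2 \<and> (\<forall>x\<in>l2. l2norm x \<le> 1 \<longrightarrow>
      (\<exists>y\<in>F. l2norm (\<lambda>i. K1 x i + K2 x i - y i) \<le> e))"
    by blast
qed

text \<open>Two of the points would lie within \<open>d/2\<close> of the same point of a finite \<open>d/2\<close>-net.\<close>

lemma compact_op_separated_finite:
  assumes K: "compact_op K" "\<And>x. x \<in> l2 \<Longrightarrow> K x \<in> l2" and "d > 0"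
    and x: "\<And>n. n \<in> S \<Longrightarrow> x n \<in> l2" "\<And>n. n \<in> S \<Longrightarrow> l2norm (x n) \<le> 1"
    and separated: "\<And>n n'. n \<in> S \<Longrightarrow> n' \<in> S \<Longrightarrow> n \<noteq> n' \<Longrightarrow>
      d < l2norm (\<lambda>i. K (x n) i - K (x n') i)"
  shows "finite S"
proof (rule ccontr)
  assume "infinite S"
  obtain F where F: "finite F" "F \<subseteq> l2"
    "\<forall>x\<in>l2. l2norm x \<le> 1 \<longrightarrow> (\<exists>y\<in>F. l2norm (\<lambda>i. K x i - y i) \<le> d / 2)"
    using K(1)[unfolded compact_op_def, rule_format, of "d / 2"] \<open>d > 0\<close> by auto
  have "\<forall>n\<in>S. \<exists>y. y \<in> F \<and> l2norm (\<lambda>i. K (x n) i - y i) \<le> d / 2"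
    using F(3) x by blast
  from bchoice[OF this] obtain near where near: "\<And>n. n \<in> S \<Longrightarrow> near n \<in> F"
    "\<And>n. n \<in> S \<Longrightarrow> l2norm (\<lambda>i. K (x n) i - near n i) \<le> d / 2"
    by blast
  have "finite (near ` S)" using near(1) F(1) by (meson finite_subset image_subsetI)
  then obtain n where n: "n \<in> S" "infinite {n' \<in> S. near n' = near n}"
    using pigeonhole_infinite[OF \<open>infinite S\<close>] by blast
  then have "infinite ({n' \<in> S. near n' = near n} - {n})" by simp
  then obtain n' where n': "n' \<in> S" "near n' = near n" "n' \<noteq> n"
    using infinite_imp_nonempty by blast
  have "near n \<in> l2" using near(1)[OF n(1)] F(2) by blast
  have "l2norm (\<lambda>i. K (x n) i - K (x n') i)
      \<le> l2norm (\<lambda>i. K (x n) i - near n i) + l2norm (\<lambda>i. near n i - K (x n') i)"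
    by (rule l2norm_diff_triangle[OF K(2)[OF x(1)[OF n(1)]] \<open>near n \<in> l2\<close> K(2)[OF x(1)[OF n'(1)]]])
  also have "\<dots> \<le> d"
    using near(2)[OF n(1)] near(2)[OF n'(1)] n'(2) l2norm_diff_commute[of "near n"] by simp
  finally show False using separated[OF n(1) n'(1)] n'(3) by simp
qed

section \<open>Matrices\<close>

text \<open>The entrywise \<open>\<ell>\<^sup>1\<close> norm is invariant under \<open>cadj\<close> and equivalent to \<open>mnorm\<close>; this
  bounds \<open>mnorm (cadj A)\<close> without any theory of adjoints.\<close>

definition entry_sum :: "complex^'m^'m \<Rightarrow> real" where
  "entry_sum A = (\<Sum>j\<in>UNIV. \<Sum>k\<in>UNIV. cmod (A $ j $ k))"

lemma norm_vec_power2: "(norm (z::complex^'m))\<^sup>2 = (\<Sum>j\<in>UNIV. (cmod (z $ j))\<^sup>2)"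
  unfolding norm_vec_def L2_set_def by (simp add: sum_nonneg)

lemma matrix_vector_mult_nth: "(A *v x) $ j = (\<Sum>k\<in>UNIV. A $ j $ k * x $ k)"
  by (simp add: matrix_vector_mult_def)

lemma norm_matrix_vector_le_entry_sum: "norm (A *v x) \<le> entry_sum A * norm (x::complex^'m)"
proof -
  have "norm (A *v x) \<le> (\<Sum>j\<in>UNIV. norm ((A *v x) $ j))"
    unfolding norm_vec_def by (rule L2_set_le_sum) simp
  also have "\<dots> \<le> (\<Sum>j\<in>UNIV. \<Sum>k\<in>UNIV. cmod (A $ j $ k) * norm x)"
  proof (rule sum_mono)
    fix j
    have "norm ((A *v x) $ j) \<le> (\<Sum>k\<in>UNIV. cmod (A $ j $ k * x $ k))"
      unfolding matrix_vector_mult_nth by (rule norm_sum)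
    also have "\<dots> \<le> (\<Sum>k\<in>UNIV. cmod (A $ j $ k) * norm x)"
      by (rule sum_mono) (auto simp: norm_mult intro!: mult_left_mono Finite_Cartesian_Product.norm_nth_le)
    finally show "norm ((A *v x) $ j) \<le> (\<Sum>k\<in>UNIV. cmod (A $ j $ k) * norm x)" .
  qed
  also have "\<dots> = entry_sum A * norm x" unfolding entry_sum_def by (simp add: sum_distrib_right)
  finally show ?thesis .
qed

lemma bounded_linear_matrix_vector_mult: "bounded_linear (\<lambda>x::complex^'m. (A::complex^'m^'m) *v x)"
proof (rule bounded_linear_intro[where K="entry_sum A"])
  show "A *v (x + y) = A *v x + A *v y" for x y by (simp add: matrix_vector_right_distrib)
  show "A *v (r *\<^sub>R x) = r *\<^sub>R (A *v x)" for r x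
    by (rule linear_scale[OF matrix_vector_mul_linear])
  show "norm (A *v x) \<le> norm x * entry_sum A" for x
    using norm_matrix_vector_le_entry_sum[of A x] by (simp add: mult.commute)
qed

lemma mnorm_nonneg: "mnorm A \<ge> 0"
  unfolding mnorm_def by (rule onorm_pos_le[OF bounded_linear_matrix_vector_mult])

lemma norm_matrix_vector_le_mnorm: "norm (A *v x) \<le> mnorm A * norm x"
  unfolding mnorm_def by (rule onorm[OF bounded_linear_matrix_vector_mult])

lemma mnorm_le_entry_sum: "mnorm A \<le> entry_sum A"
  unfolding mnorm_def by (rule onorm_le) (rule norm_matrix_vector_le_entry_sum)

lemma norm_entry_le_mnorm: "cmod (A $ j $ k) \<le> mnorm (A::complex^'m^'m)"
proof -
  have "(\<Sum>i\<in>UNIV. (norm (axis k (1::complex) $ i))\<^sup>2) = (\<Sum>i\<in>(UNIV::'m set). if i = k then 1 else 0)"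
    by (rule sum.cong) (auto simp: axis_def)
  then have "norm (axis k (1::complex) :: complex^'m) = 1"
    unfolding norm_vec_def L2_set_def by simp
  moreover have "(A *v axis k 1) $ j = A $ j $ k"
    unfolding matrix_vector_mult_nth axis_def by (simp add: if_distrib cong: if_cong)
  ultimately show ?thesis
    using Finite_Cartesian_Product.norm_nth_le[of "A *v axis k 1" j] norm_matrix_vector_le_mnorm[of A "axis k 1"] by simp
qed

lemma entry_sum_le_mnorm: "entry_sum A \<le> real CARD('m) * real CARD('m) * mnorm (A::complex^'m^'m)"
proof -
  have "entry_sum A \<le> (\<Sum>j\<in>(UNIV::'m set). \<Sum>k\<in>(UNIV::'m set). mnorm A)"
    unfolding entry_sum_def by (intro sum_mono norm_entry_le_mnorm)
  then show ?thesis by simp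
qed

lemma exists_unit_vector_norm_gt:
  assumes "e > 0" "e \<le> mnorm (A::complex^'m^'m)"
  obtains z where "norm z = 1" "e / 2 < norm (A *v z)"
proof -
  have "\<exists>x. e / 2 * norm x < norm (A *v x)"
  proof (rule ccontr)
    assume "\<nexists>x. e / 2 * norm x < norm (A *v x)"
    then have "norm (A *v x) \<le> e / 2 * norm x" for x by (simp add: not_less)
    then have "mnorm A \<le> e / 2" unfolding mnorm_def by (rule onorm_le)
    then show False using assms by simp
  qed
  then obtain x where x: "e / 2 * norm x < norm (A *v x)" by blast
  then have "norm x > 0" using assms(1) by (cases "x = 0") auto
  define z where "z = (1 / norm x) *\<^sub>R x"
  have "A *v z = (1 / norm x) *\<^sub>R (A *v x)"
    unfolding z_def by (rule linear_scale[OF matrix_vector_mul_linear])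
  then have "norm z = 1" "norm (A *v z) = norm (A *v x) / norm x"
    using \<open>norm x > 0\<close> by (simp_all add: z_def)
  moreover have "e / 2 < norm (A *v x) / norm x" using x \<open>norm x > 0\<close> by (simp add: field_simps)
  ultimately show ?thesis using that by simp
qed

lemma cadj_nth [simp]: "cadj A $ i $ j = cnj (A $ j $ i)"
  by (simp add: cadj_def)

lemma cadj_diff: "cadj (A - B) = cadj A - cadj B"
  by (simp add: vec_eq_iff)

lemma cadj_cadj [simp]: "cadj (cadj A) = A"
  by (simp add: vec_eq_iff)

lemma cadj_mult: "cadj (A ** B) = cadj B ** cadj A"
  by (simp add: vec_eq_iff matrix_matrix_mult_def mult.commute)

lemma entry_sum_cadj: "entry_sum (cadj A) = entry_sum A"
  unfolding entry_sum_def cadj_nth complex_mod_cnj by (rule sum.swap)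

lemma mnorm_cadj_le: "mnorm (cadj A) \<le> real CARD('m) * real CARD('m) * mnorm (A::complex^'m^'m)"
  using mnorm_le_entry_sum[of "cadj A"] entry_sum_le_mnorm[of A] by (simp add: entry_sum_cadj)

lemma mnorm_cadj_le_if:
  assumes "mnorm (A::complex^'m^'m) \<le> M"
  shows "mnorm (cadj A) \<le> real CARD('m) * real CARD('m) * M"
  by (rule order_trans[OF mnorm_cadj_le mult_left_mono[OF assms]]) simp

lemma tendsto_mnorm_cadj_diff:
  fixes u v :: "nat \<Rightarrow> complex^'m^'m"
  assumes "(\<lambda>i. mnorm (u i - v i)) \<longlonglongrightarrow> 0"
  shows "(\<lambda>i. mnorm (cadj (u i) - cadj (v i))) \<longlonglongrightarrow> 0"
proof (rule Lim_null_comparison)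
  show "(\<lambda>i. real CARD('m) * real CARD('m) * mnorm (u i - v i)) \<longlonglongrightarrow> 0"
    by (rule tendsto_mult_right_zero[OF assms])
  have "norm (mnorm (cadj (u i) - cadj (v i))) \<le> real CARD('m) * real CARD('m) * mnorm (u i - v i)"
    for i
    using mnorm_cadj_le[of "u i - v i"] mnorm_nonneg[of "cadj (u i - v i)"] by (simp add: cadj_diff)
  then show "\<forall>\<^sub>F i in sequentially.
      norm (mnorm (cadj (u i) - cadj (v i))) \<le> real CARD('m) * real CARD('m) * mnorm (u i - v i)"
    by simp
qed

lemma norm_unitary_entry_le_1:
  assumes "unitary_mat A"
  shows "cmod (A $ j $ k) \<le> 1"
proof -
  have "(A ** cadj A) $ j $ j = 1" using assms by (simp add: unitary_mat_def mat_def)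
  then have "(\<Sum>l\<in>UNIV. A $ j $ l * cnj (A $ j $ l)) = 1"
    by (simp add: matrix_matrix_mult_def)
  then have "(\<Sum>l\<in>UNIV. complex_of_real ((cmod (A $ j $ l))\<^sup>2)) = 1"
    by (simp only: complex_norm_square)
  then have "(\<Sum>l\<in>UNIV. (cmod (A $ j $ l))\<^sup>2) = 1"
    by (metis of_real_eq_1_iff of_real_sum)
  moreover have "(cmod (A $ j $ k))\<^sup>2 \<le> (\<Sum>l\<in>UNIV. (cmod (A $ j $ l))\<^sup>2)"
    by (rule member_le_sum) auto
  ultimately show ?thesis by (simp add: power_le_one_iff abs_le_square_iff)
qed

lemma mnorm_unitary_le:
  assumes "unitary_mat (A::complex^'m^'m)"
  shows "mnorm A \<le> real CARD('m) * real CARD('m)"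
proof -
  have "entry_sum A \<le> (\<Sum>j\<in>(UNIV::'m set). \<Sum>k\<in>(UNIV::'m set). 1)"
    unfolding entry_sum_def by (intro sum_mono norm_unitary_entry_le_1[OF assms])
  then show ?thesis using mnorm_le_entry_sum[of A] by simp
qed

lemma unitary_cadj: "unitary_mat A \<Longrightarrow> unitary_mat (cadj A)"
  by (simp add: unitary_mat_def)

lemma unitary_mult:
  assumes "unitary_mat A" "unitary_mat B"
  shows "unitary_mat (A ** B)"
proof -
  have "(A ** B) ** cadj (A ** B) = A ** (B ** cadj B) ** cadj A"
    "cadj (A ** B) ** (A ** B) = cadj B ** (cadj A ** A) ** B"
    by (simp_all only: cadj_mult matrix_mul_assoc)
  then show ?thesis using assms by (simp add: unitary_mat_def)
qed

section \<open>Operators on \<open>\<ell>\<^sup>2(\<nat> \<times> 'm)\<close>\<close>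

definition fibre :: "(nat \<times> 'm \<Rightarrow> complex) \<Rightarrow> nat \<Rightarrow> complex^'m" where
  "fibre y i = (\<chi> j. y (i, j))"

lemma fibre_nth [simp]: "fibre y i $ j = y (i, j)"
  by (simp add: fibre_def)

lemma diag_act_apply: "diag_act d y (i, j) = (d i *v fibre y i) $ j"
  by (simp add: diag_act_def fibre_def)

lemma sum_le_sum_fibres:
  fixes g :: "nat \<times> 'm::finite \<Rightarrow> real"
  assumes "finite F" "\<And>p. g p \<ge> 0"
  shows "(\<Sum>p\<in>F. g p) \<le> (\<Sum>i\<in>fst ` F. \<Sum>j\<in>UNIV. g (i, j))"
proof -
  have "(\<Sum>p\<in>F. g p) \<le> (\<Sum>p\<in>fst ` F \<times> UNIV. g p)"
    by (rule sum_mono2) (use assms in \<open>auto simp: rev_image_eqI\<close>)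
  then show ?thesis by (simp add: sum.cartesian_product)
qed

lemma sum_fibres_le_l2sq:
  fixes y :: "nat \<times> 'm::finite \<Rightarrow> complex"
  assumes "y \<in> l2" "finite G"
  shows "(\<Sum>i\<in>G. (norm (fibre y i))\<^sup>2) \<le> l2sq y"
proof -
  have "(\<Sum>i\<in>G. (norm (fibre y i))\<^sup>2) = (\<Sum>p\<in>G \<times> UNIV. (cmod (y p))\<^sup>2)"
    by (simp add: norm_vec_power2 sum.cartesian_product)
  also have "\<dots> \<le> l2sq y" by (rule sum_le_l2sq) (use assms in auto)
  finally show ?thesis .
qed

lemma norm_fibre_le_l2norm:
  assumes "y \<in> l2"
  shows "norm (fibre y i) \<le> l2norm y"
proof -
  have "(norm (fibre y i))\<^sup>2 \<le> (l2norm y)\<^sup>2"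
    using sum_fibres_le_l2sq[OF assms, of "{i}"] by (simp add: l2norm_power2)
  then show ?thesis using l2norm_nonneg by (rule power2_le_imp_le)
qed

lemma diag_act_l2:
  fixes d :: "nat \<Rightarrow> complex^'m^'m"
  assumes M: "\<And>i. mnorm (d i) \<le> M" and y: "y \<in> l2"
  shows "diag_act d y \<in> l2" "l2norm (diag_act d y) \<le> M * l2norm y"
proof -
  have "M \<ge> 0" using M[of 0] mnorm_nonneg[of "d 0"] by linarith
  have "(\<Sum>p\<in>F. (cmod (diag_act d y p))\<^sup>2) \<le> (M * l2norm y)\<^sup>2" if "finite F" for F
  proof -
    have "(\<Sum>p\<in>F. (cmod (diag_act d y p))\<^sup>2) \<le> (\<Sum>i\<in>fst ` F. (norm (d i *v fibre y i))\<^sup>2)"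
      using sum_le_sum_fibres[OF that, of "\<lambda>p. (cmod (diag_act d y p))\<^sup>2"]
      by (simp add: diag_act_apply norm_vec_power2)
    also have "\<dots> \<le> (\<Sum>i\<in>fst ` F. M\<^sup>2 * (norm (fibre y i))\<^sup>2)"
    proof (rule sum_mono)
      fix i
      have "norm (d i *v fibre y i) \<le> M * norm (fibre y i)"
        using norm_matrix_vector_le_mnorm[of "d i" "fibre y i"] M[of i]
        by (meson mult_right_mono norm_ge_zero order_trans)
      then show "(norm (d i *v fibre y i))\<^sup>2 \<le> M\<^sup>2 * (norm (fibre y i))\<^sup>2"
        by (metis norm_ge_zero power_mono power_mult_distrib)
    qed
    also have "\<dots> \<le> M\<^sup>2 * l2sq y"
      by (simp add: sum_distrib_left[symmetric] mult_left_mono sum_fibres_le_l2sq[OF y] that)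
    finally show ?thesis by (simp add: power_mult_distrib l2norm_power2)
  qed
  then show "diag_act d y \<in> l2" "l2norm (diag_act d y) \<le> M * l2norm y"
    using l2norm_le_by_finite_sums[of "diag_act d y" "M * l2norm y"] \<open>M \<ge> 0\<close> l2norm_nonneg[of y]
    by auto
qed

lemma diag_act_add: "diag_act d (\<lambda>p. x p + y p) = (\<lambda>p. diag_act d x p + diag_act d y p)"
  by (auto simp: diag_act_apply matrix_vector_mult_nth sum.distrib distrib_left)

lemma diag_act_scale: "diag_act d (\<lambda>p. c * x p) = (\<lambda>p. c * diag_act d x p)"
  by (auto simp: diag_act_apply matrix_vector_mult_nth sum_distrib_left algebra_simps)

lemma diag_act_diff: "diag_act d (\<lambda>p. x p - y p) = (\<lambda>p. diag_act d x p - diag_act d y p)"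
  by (auto simp: diag_act_apply matrix_vector_mult_nth sum_subtractf right_diff_distrib)

lemma diag_act_matrix_diff:
  "diag_act (\<lambda>i. A i - B i) x = (\<lambda>p. diag_act A x p - diag_act B x p)"
  by (auto simp: diag_act_apply matrix_vector_mult_diff_rdistrib)

lemma diag_act_diag_act: "diag_act A (diag_act B x) = diag_act (\<lambda>i. A i ** B i) x"
proof -
  have "fibre (diag_act B x) i = B i *v fibre x i" for i
    by (simp add: vec_eq_iff diag_act_apply)
  then show ?thesis by (auto simp: diag_act_apply matrix_vector_mul_assoc)
qed

lemma bounded_op_diag_act:
  fixes d :: "nat \<Rightarrow> complex^'m^'m"
  assumes "\<And>i. mnorm (d i) \<le> M"
  shows "bounded_op (diag_act d)"
  unfolding bounded_op_def
proof (intro conjI ballI allI)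
  show "diag_act d x \<in> l2" if "x \<in> l2" for x by (rule diag_act_l2(1)[of d M, OF assms that])
  show "diag_act d (\<lambda>i. x i + y i) = (\<lambda>i. diag_act d x i + diag_act d y i)" for x y
    by (rule diag_act_add)
  show "diag_act d (\<lambda>i. c * x i) = (\<lambda>i. c * diag_act d x i)" for x c by (rule diag_act_scale)
  show "\<exists>C. \<forall>x\<in>l2. l2norm (diag_act d x) \<le> C * l2norm x" using diag_act_l2(2)[of d M, OF assms] by blast
qed

lemma slice_l2:
  fixes y :: "nat \<times> 'm::finite \<Rightarrow> complex"
  assumes "y \<in> l2"
  shows "(\<lambda>k. y (k, j)) \<in> l2" "l2sq (\<lambda>k. y (k, j)) \<le> l2sq y"
proof -
  have "(\<Sum>k\<in>G. (cmod (y (k, j)))\<^sup>2) \<le> l2sq y" if "finite G" for G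
  proof -
    have "(\<Sum>k\<in>G. (cmod (y (k, j)))\<^sup>2) = (\<Sum>p\<in>(\<lambda>k. (k, j)) ` G. (cmod (y p))\<^sup>2)"
      by (subst sum.reindex) (auto simp: inj_on_def)
    also have "\<dots> \<le> l2sq y" by (rule sum_le_l2sq) (use assms that in auto)
    finally show ?thesis .
  qed
  then show "(\<lambda>k. y (k, j)) \<in> l2" "l2sq (\<lambda>k. y (k, j)) \<le> l2sq y"
    using l2_by_finite_sums[of "\<lambda>k. y (k, j)" "l2sq y"] by auto
qed

lemma tens1_apply: "tens1 T y (k, j) = T (\<lambda>k'. y (k', j)) k"
  by (simp add: tens1_def)

lemma tens1_l2:
  fixes y :: "nat \<times> 'm::finite \<Rightarrow> complex"
  assumes T: "bounded_op T" and C: "C \<ge> 0" "\<And>x. x \<in> l2 \<Longrightarrow> l2norm (T x) \<le> C * l2norm x"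
    and y: "y \<in> l2"
  shows "tens1 T y \<in> l2" "l2norm (tens1 T y) \<le> sqrt CARD('m) * C * l2norm y"
proof -
  have slice: "l2sq (T (\<lambda>k. y (k, j))) \<le> C\<^sup>2 * l2sq y" for j
  proof -
    have "(l2norm (T (\<lambda>k. y (k, j))))\<^sup>2 \<le> (C * l2norm (\<lambda>k. y (k, j)))\<^sup>2"
      by (rule power_mono[OF C(2)[OF slice_l2(1)[OF y]] l2norm_nonneg])
    then show ?thesis
      using mult_left_mono[OF slice_l2(2)[OF y, of j], of "C\<^sup>2"]
      by (simp add: l2norm_power2 power_mult_distrib)
  qed
  have "(\<Sum>p\<in>F. (cmod (tens1 T y p))\<^sup>2) \<le> (sqrt CARD('m) * C * l2norm y)\<^sup>2" if "finite F" for F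
  proof -
    have "(\<Sum>p\<in>F. (cmod (tens1 T y p))\<^sup>2)
        \<le> (\<Sum>i\<in>fst ` F. \<Sum>j\<in>UNIV. (cmod (tens1 T y (i, j)))\<^sup>2)"
      by (rule sum_le_sum_fibres[OF that]) simp
    also have "\<dots> = (\<Sum>j\<in>UNIV. \<Sum>i\<in>fst ` F. (cmod (T (\<lambda>k. y (k, j)) i))\<^sup>2)"
      unfolding tens1_apply by (rule sum.swap)
    also have "\<dots> \<le> (\<Sum>j\<in>(UNIV::'m set). C\<^sup>2 * l2sq y)"
      using sum_le_l2sq[OF bounded_op_l2[OF T slice_l2(1)[OF y]]] slice that
      by (intro sum_mono) (meson finite_imageI order_trans)
    also have "\<dots> = (sqrt CARD('m) * C * l2norm y)\<^sup>2"
      by (simp add: power_mult_distrib l2norm_power2)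
    finally show ?thesis .
  qed
  then show "tens1 T y \<in> l2" "l2norm (tens1 T y) \<le> sqrt CARD('m) * C * l2norm y"
    using l2norm_le_by_finite_sums[of "tens1 T y" "sqrt CARD('m) * C * l2norm y"] C(1)
      l2norm_nonneg[of y]
    by auto
qed

lemma bounded_op_tens1:
  assumes T: "bounded_op T"
  shows "bounded_op (tens1 T :: (nat \<times> 'm::finite \<Rightarrow> complex) \<Rightarrow> _)"
proof -
  obtain C where C: "C > 0" "\<And>x. x \<in> l2 \<Longrightarrow> l2norm (T x) \<le> C * l2norm x"
    using bounded_op_normE[OF T] by blast
  note l2 = tens1_l2[OF T less_imp_le[OF C(1)] C(2)]
  have "tens1 T (\<lambda>p. x p + y p) = (\<lambda>p. tens1 T x p + tens1 T y p)"
    if "x \<in> l2" "y \<in> l2" for x y :: "nat \<times> 'm \<Rightarrow> complex"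
    using bounded_op_add[OF T slice_l2(1)[OF that(1)] slice_l2(1)[OF that(2)]]
    by (auto simp: tens1_apply)
  moreover have "tens1 T (\<lambda>p. c * x p) = (\<lambda>p. c * tens1 T x p)"
    if "x \<in> l2" for x :: "nat \<times> 'm \<Rightarrow> complex" and c
    using bounded_op_scale[OF T slice_l2(1)[OF that]] by (auto simp: tens1_apply)
  ultimately show ?thesis unfolding bounded_op_def using l2 by blast
qed

lemma mnorm_boundedE:
  assumes "(\<lambda>i. mnorm (e i)) \<longlonglongrightarrow> 0"
  obtains M where "\<And>i. mnorm (e i) \<le> M"
proof -
  have "Bseq (\<lambda>i. mnorm (e i))" using assms by (intro convergent_imp_Bseq convergentI)
  then obtain M where "\<forall>i. norm (mnorm (e i)) \<le> M" by (auto simp: Bseq_def)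
  then show ?thesis by (intro that) (auto simp: abs_le_iff)
qed

lemma bounded_op_diag_act_if_tendsto:
  "(\<lambda>i. mnorm (e i)) \<longlonglongrightarrow> 0 \<Longrightarrow> bounded_op (diag_act e)"
  using mnorm_boundedE bounded_op_diag_act by metis

lemma compact_op_diag_act_comp:
  fixes e :: "nat \<Rightarrow> complex^'m^'m"
  assumes B: "bounded_op B" and lim: "(\<lambda>i. mnorm (e i)) \<longlonglongrightarrow> 0"
  shows "compact_op (\<lambda>y. diag_act e (B y))"
proof -
  obtain M where M: "\<And>i. mnorm (e i) \<le> M" using mnorm_boundedE[OF lim] by blast
  obtain C where "C > 0" and C: "\<And>x. x \<in> l2 \<Longrightarrow> l2norm (B x) \<le> C * l2norm x"
    using bounded_op_normE[OF B] by blast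
  have small: "l2norm (diag_act e' (B x)) \<le> b * C"
    if "\<And>i. mnorm (e' i) \<le> b" "x \<in> l2" "l2norm x \<le> 1" for e' :: "nat \<Rightarrow> complex^'m^'m" and b x
  proof -
    have "b \<ge> 0" using that(1)[of 0] mnorm_nonneg[of "e' 0"] by linarith
    have "l2norm (B x) \<le> C"
      using order_trans[OF C[OF that(2)] mult_left_mono[OF that(3)]] \<open>C > 0\<close> by simp
    have "l2norm (diag_act e' (B x)) \<le> b * l2norm (B x)"
      by (rule diag_act_l2(2)[OF that(1) bounded_op_l2[OF B that(2)]])
    also have "\<dots> \<le> b * C" by (rule mult_left_mono[OF \<open>l2norm (B x) \<le> C\<close> \<open>b \<ge> 0\<close>])
    finally show ?thesis .
  qed
  show ?thesis
  proof (rule compact_op_if_small_tails)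
    show "diag_act e (B x) \<in> l2" if "x \<in> l2" for x
      by (rule diag_act_l2(1)[OF M bounded_op_l2[OF B that]])
    show "l2norm (diag_act e (B x)) \<le> M * C" if "x \<in> l2" "l2norm x \<le> 1" for x
      by (rule small[OF M that])
    fix eps :: real assume "eps > 0"
    then obtain N where N: "\<And>i. i \<ge> N \<Longrightarrow> mnorm (e i) < eps / C"
      using order_tendstoD(2)[OF lim, of "eps / C"] \<open>C > 0\<close> by (auto simp: eventually_sequentially)
    define e' where "e' i = (if i < N then 0 else e i)" for i
    have "mnorm (e' i) \<le> eps / C" for i
      using N[of i] \<open>eps > 0\<close> \<open>C > 0\<close> by (simp add: e'_def mnorm_def onorm_zero less_imp_le)
    then have "l2norm (diag_act e' (B x)) \<le> eps" if "x \<in> l2" "l2norm x \<le> 1" for x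
      using small[OF _ that, of e' "eps / C"] \<open>C > 0\<close> by simp
    moreover have "(\<lambda>p. if p \<in> {..<N} \<times> UNIV then 0 else diag_act e (B x) p) = diag_act e' (B x)"
      for x by (auto simp: diag_act_apply e'_def)
    ultimately show "\<exists>A. finite A \<and> (\<forall>x\<in>l2. l2norm x \<le> 1 \<longrightarrow>
        l2norm (\<lambda>p. if p \<in> A then 0 else diag_act e (B x) p) \<le> eps)"
      by (intro exI[of _ "{..<N} \<times> UNIV"]) auto
  qed
qed

lemma bounded_op_Phi:
  fixes u :: "nat \<Rightarrow> complex^'m^'m"
  assumes T: "bounded_op T" and u: "\<And>i. unitary_mat (u i)"
  shows "bounded_op (Phi u T)"
proof -
  have "bounded_op (\<lambda>y. tens1 T (diag_act (\<lambda>i. cadj (u i)) y))"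
    by (rule bounded_op_comp[OF bounded_op_tens1[OF T]
          bounded_op_diag_act[OF mnorm_unitary_le[OF unitary_cadj[OF u]]]])
  from bounded_op_comp[OF bounded_op_diag_act[OF mnorm_unitary_le[OF u]] this]
  show ?thesis by (simp add: Phi_def comp_def)
qed

section \<open>Asymptotically equal unitaries\<close>

lemma Phi_diff_eq:
  fixes u v :: "nat \<Rightarrow> complex^'m^'m"
  assumes T: "bounded_op T" and u: "\<And>i. mnorm (cadj (u i)) \<le> M"
    and v: "\<And>i. mnorm (cadj (v i)) \<le> M" and y: "y \<in> l2"
  shows "(\<lambda>p. Phi u T y p - Phi v T y p) =
    (\<lambda>p. diag_act (\<lambda>i. u i - v i) (tens1 T (diag_act (\<lambda>i. cadj (u i)) y)) p
       + diag_act v (tens1 T (diag_act (\<lambda>i. cadj (u i) - cadj (v i)) y)) p)"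
proof -
  define z where "z = diag_act (\<lambda>i. cadj (u i)) y"
  define w where "w = diag_act (\<lambda>i. cadj (v i)) y"
  have "z \<in> l2" "w \<in> l2" unfolding z_def w_def using diag_act_l2(1)[OF u y] diag_act_l2(1)[OF v y] .
  then have "tens1 T (diag_act (\<lambda>i. cadj (u i) - cadj (v i)) y) = (\<lambda>p. tens1 T z p - tens1 T w p)"
    unfolding z_def w_def diag_act_matrix_diff by (rule bounded_op_diff[OF bounded_op_tens1[OF T]])
  then show ?thesis
    by (simp add: Phi_def z_def[symmetric] w_def[symmetric] diag_act_matrix_diff diag_act_diff)
qed

lemma compact_Phi_diff:
  fixes u v :: "nat \<Rightarrow> complex^'m^'m"
  assumes u: "\<And>i. mnorm (u i) \<le> M" and v: "\<And>i. mnorm (v i) \<le> M"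
    and lim: "(\<lambda>i. mnorm (u i - v i)) \<longlonglongrightarrow> 0" and T: "bounded_op T"
  shows "compact_op (\<lambda>y p. Phi u T y p - Phi v T y p)"
proof -
  note u' = mnorm_cadj_le_if[OF u] and v' = mnorm_cadj_le_if[OF v]
  note lim' = tendsto_mnorm_cadj_diff[OF lim]
  define T1 where "T1 = (tens1 T :: (nat \<times> 'm \<Rightarrow> complex) \<Rightarrow> _)"
  have "bounded_op T1" unfolding T1_def by (rule bounded_op_tens1[OF T])
  define K1 where "K1 = (\<lambda>y. diag_act (\<lambda>i. u i - v i) (T1 (diag_act (\<lambda>i. cadj (u i)) y)))"
  define K0 where "K0 = diag_act (\<lambda>i. cadj (u i) - cadj (v i))"
  define K2 where "K2 = (\<lambda>y. diag_act v (T1 (K0 y)))"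
  have B1: "bounded_op (\<lambda>y. T1 (diag_act (\<lambda>i. cadj (u i)) y))"
    by (rule bounded_op_comp[OF \<open>bounded_op T1\<close> bounded_op_diag_act[OF u']])
  have B2: "bounded_op (\<lambda>z. diag_act v (T1 z))"
    by (rule bounded_op_comp[OF bounded_op_diag_act[OF v] \<open>bounded_op T1\<close>])
  have "bounded_op K1"
    unfolding K1_def by (rule bounded_op_comp[OF bounded_op_diag_act_if_tendsto[OF lim] B1])
  have "bounded_op K0" unfolding K0_def by (rule bounded_op_diag_act_if_tendsto[OF lim'])
  then have "bounded_op K2" unfolding K2_def by (rule bounded_op_comp[OF B2])
  have "compact_op K1" unfolding K1_def by (rule compact_op_diag_act_comp[OF B1 lim])
  have "compact_op K0" using compact_op_diag_act_comp[OF bounded_op_id lim'] by (simp add: K0_def)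
  then have "compact_op K2"
    unfolding K2_def by (rule compact_op_bounded_comp[OF _ bounded_op_l2[OF \<open>bounded_op K0\<close>] B2])
  have "compact_op (\<lambda>y p. K1 y p + K2 y p)"
    by (rule compact_op_add[OF \<open>compact_op K1\<close> bounded_op_l2[OF \<open>bounded_op K1\<close>]
          \<open>compact_op K2\<close> bounded_op_l2[OF \<open>bounded_op K2\<close>]])
  then show ?thesis
  proof (rule compact_op_cong)
    fix y :: "nat \<times> 'm \<Rightarrow> complex" assume "y \<in> l2"
    have "(\<lambda>p. Phi u T y p - Phi v T y p) = (\<lambda>p. K1 y p + K2 y p)"
      unfolding K1_def K2_def K0_def T1_def by (rule Phi_diff_eq[OF T u' v' \<open>y \<in> l2\<close>])
    then show "(\<lambda>p. K1 y p + K2 y p) = (\<lambda>p. Phi u T y p - Phi v T y p)" by (rule sym)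
  qed
qed

section \<open>Block-diagonal operators\<close>

lemma Delta_ge_mnorm:
  assumes "finite I" "i \<in> I" "j \<in> I"
  shows "mnorm (u i ** cadj (u j) - v i ** cadj (v j)) \<le> Delta I u v"
proof -
  define f where "f p = mnorm (u (fst p) ** cadj (u (snd p)) - v (fst p) ** cadj (v (snd p)))" for p
  have "f (i, j) \<le> (SUP p\<in>I \<times> I. f p)"
    by (rule cSUP_upper) (use assms in \<open>auto intro: bdd_above_finite\<close>)
  then show ?thesis by (simp add: Delta_def f_def)
qed

lemma Delta_nonneg:
  assumes "finite I" "i \<in> I"
  shows "Delta I u v \<ge> 0"
  using order_trans[OF mnorm_nonneg Delta_ge_mnorm[OF assms assms(2)]] .

lemma Delta_attained:
  assumes "finite I" "I \<noteq> {}"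
  obtains i j where "i \<in> I" "j \<in> I" "Delta I u v = mnorm (u i ** cadj (u j) - v i ** cadj (v j))"
proof -
  define f where "f p = mnorm (u (fst p) ** cadj (u (snd p)) - v (fst p) ** cadj (v (snd p)))" for p
  have "Delta I u v = Max (f ` (I \<times> I))"
    unfolding Delta_def f_def[symmetric] using assms by (intro cSup_eq_Max) auto
  moreover have "Max (f ` (I \<times> I)) \<in> f ` (I \<times> I)" using assms by (intro Max_in) auto
  ultimately obtain p where "p \<in> I \<times> I" "Delta I u v = f p" by auto
  then show ?thesis using that[of "fst p" "snd p"] by (auto simp: f_def)
qed

lemma l2_proj:
  assumes "f \<in> l2"
  shows "proj S f \<in> l2"
proof (rule l2_by_finite_sums(1))
  fix F :: "nat set" assume "finite F"
  have "(\<Sum>i\<in>F. (cmod (proj S f i))\<^sup>2) \<le> (\<Sum>i\<in>F. (cmod (f i))\<^sup>2)"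
    by (rule sum_mono) (simp add: proj_def)
  also have "\<dots> \<le> l2sq f" by (rule sum_le_l2sq[OF assms \<open>finite F\<close>])
  finally show "(\<Sum>i\<in>F. (cmod (proj S f i))\<^sup>2) \<le> l2sq f" .
qed

lemma D_alg_apply_proj:
  assumes "T \<in> D_alg E" "f \<in> l2" "k \<in> E n"
  shows "T f k = T (proj (E n) f) k"
  using assms unfolding D_alg_def by (auto simp: proj_def)

locale interval_partition =
  fixes a :: "nat \<Rightarrow> nat"
  assumes a_0: "a 0 = 0" and strict_mono_a: "strict_mono a"
begin

abbreviation block :: "nat \<Rightarrow> nat set" where
  "block n \<equiv> {a n..<a (Suc n)}"

definition block_of :: "nat \<Rightarrow> nat" where
  "block_of k = (LEAST n. k < a (Suc n))"

lemma a_mem_block: "a n \<in> block n"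
  using strict_mono_a by (simp add: strict_mono_def)

lemma block_of_mem: "k \<in> block (block_of k)"
proof -
  have "k < a (Suc k)" using seq_suble[OF strict_mono_a, of "Suc k"] by simp
  then have upper: "k < a (Suc (block_of k))" unfolding block_of_def by (rule LeastI)
  have "a (block_of k) \<le> k"
  proof (cases "block_of k")
    case (Suc m)
    then have "m < block_of k" by simp
    then have "\<not> k < a (Suc m)" unfolding block_of_def by (rule not_less_Least)
    then show ?thesis using Suc by simp
  qed (simp add: a_0)
  with upper show ?thesis by simp
qed

lemma block_of_ge:
  assumes "a N \<le> k"
  shows "N \<le> block_of k"
proof (rule ccontr)
  assume "\<not> N \<le> block_of k"
  then have "a (Suc (block_of k)) \<le> a N" using strict_mono_leD[OF strict_mono_a] by simp
  then show False using block_of_mem[of k] assms by simp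
qed

lemma block_of_eqI:
  assumes "k \<in> block n"
  shows "block_of k = n"
proof -
  have "block_of k \<le> n" unfolding block_of_def by (rule Least_le) (use assms in simp)
  moreover have "n \<le> block_of k" by (rule block_of_ge) (use assms in simp)
  ultimately show ?thesis by simp
qed

lemma mem_block_iff: "k \<in> block n \<longleftrightarrow> block_of k = n"
  using block_of_eqI block_of_mem by blast

lemma filterlim_block_of: "filterlim block_of at_top sequentially"
  unfolding filterlim_at_top eventually_sequentially using block_of_ge by blast

lemma Delta_block_nonneg: "Delta (block n) u v \<ge> 0"
  using Delta_nonneg[OF _ a_mem_block] by simp

lemma proj_block_slice_diag_act:
  "proj (block n) (\<lambda>k. diag_act (\<lambda>i. C (block_of i)) z (k, j))
     = (\<lambda>k. \<Sum>l\<in>UNIV. C n $ j $ l * proj (block n) (\<lambda>k. z (k, l)) k)"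
proof
  fix k
  show "proj (block n) (\<lambda>k. diag_act (\<lambda>i. C (block_of i)) z (k, j)) k
      = (\<Sum>l\<in>UNIV. C n $ j $ l * proj (block n) (\<lambda>k. z (k, l)) k)"
  proof (cases "k \<in> block n")
    case True
    then show ?thesis
      using block_of_eqI[OF True] by (simp add: proj_def diag_act_apply matrix_vector_mult_nth)
  qed (auto simp: proj_def)
qed

lemma tens1_diag_act_block_commute:
  fixes C :: "nat \<Rightarrow> complex^'m^'m"
  assumes T: "T \<in> D_alg block" and z: "z \<in> l2" and C: "\<And>n. mnorm (C n) \<le> M"
  shows "tens1 T (diag_act (\<lambda>i. C (block_of i)) z) = diag_act (\<lambda>i. C (block_of i)) (tens1 T z)"
proof
  fix p :: "nat \<times> 'm"
  obtain k j where p: "p = (k, j)" by (cases p)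
  define n where "n = block_of k"
  have "bounded_op T" using T unfolding D_alg_def by blast
  have k: "k \<in> block n" unfolding n_def by (rule block_of_mem)
  have Cz: "diag_act (\<lambda>i. C (block_of i)) z \<in> l2" using diag_act_l2(1)[OF C z] .
  have zl: "proj (block n) (\<lambda>k. z (k, l)) \<in> l2" for l by (rule l2_proj[OF slice_l2(1)[OF z]])
  have "tens1 T (diag_act (\<lambda>i. C (block_of i)) z) p
      = T (proj (block n) (\<lambda>k. diag_act (\<lambda>i. C (block_of i)) z (k, j))) k"
    unfolding p tens1_apply by (rule D_alg_apply_proj[OF T slice_l2(1)[OF Cz] k])
  also have "\<dots> = (\<Sum>l\<in>UNIV. C n $ j $ l * T (proj (block n) (\<lambda>k. z (k, l))) k)"
    unfolding proj_block_slice_diag_act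
    using bounded_op_sum[OF \<open>bounded_op T\<close>, of UNIV "\<lambda>l. proj (block n) (\<lambda>k. z (k, l))"] zl
    by simp
  also have "\<dots> = (\<Sum>l\<in>UNIV. C n $ j $ l * T (\<lambda>k. z (k, l)) k)"
    using D_alg_apply_proj[OF T slice_l2(1)[OF z] k] by simp
  also have "\<dots> = diag_act (\<lambda>i. C (block_of i)) (tens1 T z) p"
    unfolding p diag_act_apply matrix_vector_mult_nth n_def by (simp add: tens1_apply)
  finally show "tens1 T (diag_act (\<lambda>i. C (block_of i)) z) p
      = diag_act (\<lambda>i. C (block_of i)) (tens1 T z) p" .
qed

lemma Phi_mult_block_unitary:
  fixes u C :: "nat \<Rightarrow> complex^'m^'m"
  assumes T: "T \<in> D_alg block" and u: "\<And>i. unitary_mat (u i)"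
    and C: "\<And>n. unitary_mat (C n)" and y: "y \<in> l2"
  shows "Phi (\<lambda>i. u i ** cadj (C (block_of i))) T y = Phi u T y"
proof -
  define c where "c i = C (block_of i)" for i
  define z where "z = diag_act (\<lambda>i. cadj (u i)) y"
  have "z \<in> l2" unfolding z_def by (rule diag_act_l2(1)[OF mnorm_unitary_le[OF unitary_cadj[OF u]] y])
  have cancel: "(u i ** cadj (c i)) ** c i = u i" for i
    using C[of "block_of i"] by (simp add: c_def unitary_mat_def matrix_mul_assoc[symmetric])
  have commute: "tens1 T (diag_act c z) = diag_act c (tens1 T z)"
    unfolding c_def by (rule tens1_diag_act_block_commute[OF T \<open>z \<in> l2\<close> mnorm_unitary_le[OF C]])
  have "Phi (\<lambda>i. u i ** cadj (c i)) T y = diag_act (\<lambda>i. u i ** cadj (c i)) (tens1 T (diag_act c z))"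
    by (simp add: Phi_def z_def cadj_mult diag_act_diag_act)
  also have "\<dots> = diag_act (\<lambda>i. u i ** cadj (c i)) (diag_act c (tens1 T z))"
    by (simp only: commute)
  also have "\<dots> = diag_act u (tens1 T z)" by (simp add: diag_act_diag_act cancel)
  also have "\<dots> = Phi u T y" by (simp add: Phi_def z_def)
  finally show ?thesis unfolding c_def .
qed

lemma compact_Phi_diff_if_Delta_tendsto:
  fixes u v :: "nat \<Rightarrow> complex^'m^'m"
  assumes u: "\<And>i. unitary_mat (u i)" and v: "\<And>i. unitary_mat (v i)"
    and lim: "(\<lambda>n. Delta (block n) u v) \<longlonglongrightarrow> 0" and T: "T \<in> D_alg block"
  shows "compact_op (\<lambda>y p. Phi u T y p - Phi v T y p)"
proof -
  define w where "w = (\<lambda>i. u i ** cadj (u (a (block_of i))))"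
  define w' where "w' = (\<lambda>i. v i ** cadj (v (a (block_of i))))"
  have "unitary_mat (w i)" "unitary_mat (w' i)" for i
    unfolding w_def w'_def using u v by (simp_all add: unitary_mult unitary_cadj)
  note bounded = this[THEN mnorm_unitary_le]
  have "mnorm (w i - w' i) \<le> Delta (block (block_of i)) u v" for i
    unfolding w_def w'_def by (rule Delta_ge_mnorm[OF _ block_of_mem a_mem_block]) simp
  then have "(\<lambda>i. mnorm (w i - w' i)) \<longlonglongrightarrow> 0"
    by (intro Lim_null_comparison[OF _ filterlim_compose[OF lim filterlim_block_of]])
      (simp add: mnorm_nonneg)
  moreover have "bounded_op T" using T unfolding D_alg_def by blast
  ultimately have "compact_op (\<lambda>y p. Phi w T y p - Phi w' T y p)"
    using compact_Phi_diff bounded by blast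
  then show ?thesis
  proof (rule compact_op_cong)
    fix y :: "nat \<times> 'm \<Rightarrow> complex" assume "y \<in> l2"
    then show "(\<lambda>p. Phi w T y p - Phi w' T y p) = (\<lambda>p. Phi u T y p - Phi v T y p)"
      unfolding w_def w'_def
      using Phi_mult_block_unitary[where C="\<lambda>n. u (a n)", OF T u u]
        Phi_mult_block_unitary[where C="\<lambda>n. v (a n)", OF T v v]
      by simp
  qed
qed

end

definition basis_tensor :: "nat \<Rightarrow> complex^'m \<Rightarrow> nat \<times> 'm \<Rightarrow> complex" where
  "basis_tensor m z = (\<lambda>(k, l). if k = m then z $ l else 0)"

lemma basis_tensor_apply: "basis_tensor m z (k, l) = (if k = m then z $ l else 0)"
  by (simp add: basis_tensor_def)

lemma fibre_basis_tensor: "fibre (basis_tensor m z) k = (if k = m then z else 0)"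
  by (simp add: vec_eq_iff basis_tensor_apply)

lemma diag_act_basis_tensor: "diag_act d (basis_tensor m z) = basis_tensor m (d m *v z)"
  by (auto simp: diag_act_apply fibre_basis_tensor basis_tensor_apply)

lemma basis_tensor_l2:
  fixes z :: "complex^'m"
  shows "basis_tensor m z \<in> l2" "l2norm (basis_tensor m z) = norm z"
proof -
  have fin: "finite ({m} \<times> (UNIV :: 'm set))" by simp
  have zero: "basis_tensor m z p = 0" if "p \<notin> {m} \<times> UNIV" for p
    using that by (cases p) (simp add: basis_tensor_apply)
  show "basis_tensor m z \<in> l2" by (rule l2_finite_support(1)[OF fin zero])
  have "l2sq (basis_tensor m z) = (\<Sum>p\<in>{m} \<times> UNIV. (cmod (basis_tensor m z p))\<^sup>2)"
    by (rule l2_finite_support(2)[OF fin zero])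
  also have "{m} \<times> (UNIV :: 'm set) = (\<lambda>l. (m, l)) ` UNIV" by auto
  also have "(\<Sum>p\<in>(\<lambda>l. (m, l)) ` UNIV. (cmod (basis_tensor m z p))\<^sup>2) = (norm z)\<^sup>2"
    by (subst sum.reindex) (auto simp: inj_on_def basis_tensor_apply norm_vec_power2)
  finally show "l2norm (basis_tensor m z) = norm z" by (simp add: l2norm_eq_sqrt_l2sq)
qed

lemma norm_le_l2norm_basis_tensor_diff:
  assumes "m \<noteq> m'"
  shows "norm z \<le> l2norm (\<lambda>p. basis_tensor m z p - basis_tensor m' z' p)"
proof -
  have "fibre (\<lambda>p. basis_tensor m z p - basis_tensor m' z' p) m = z"
    using assms by (simp add: vec_eq_iff basis_tensor_apply)
  then show ?thesis
    using norm_fibre_le_l2norm[OF l2_diff(1)[OF basis_tensor_l2(1) basis_tensor_l2(1)], of m z m' z' m]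
    by simp
qed

locale block_pairs = interval_partition +
  fixes I J :: "nat \<Rightarrow> nat"
  assumes I_mem: "I n \<in> block n" and J_mem: "J n \<in> block n"
begin

lemma block_of_I [simp]: "block_of (I n) = n"
  by (rule block_of_eqI[OF I_mem])

lemma block_of_J [simp]: "block_of (J n) = n"
  by (rule block_of_eqI[OF J_mem])

definition shift :: "(nat \<Rightarrow> complex) \<Rightarrow> nat \<Rightarrow> complex" where
  "shift f k = (if k = I (block_of k) then f (J (block_of k)) else 0)"

lemma shift_l2:
  assumes f: "f \<in> l2"
  shows "shift f \<in> l2" "l2norm (shift f) \<le> l2norm f"
proof -
  have "(\<Sum>k\<in>F. (cmod (shift f k))\<^sup>2) \<le> (l2norm f)\<^sup>2" if "finite F" for F
  proof -
    define R where "R = {k \<in> F. k = I (block_of k)}"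
    have "inj_on block_of R"
    proof (rule inj_onI)
      fix x y assume "x \<in> R" "y \<in> R" "block_of x = block_of y"
      then have "x = I (block_of x)" "y = I (block_of y)" by (simp_all add: R_def)
      with \<open>block_of x = block_of y\<close> show "x = y" by simp
    qed
    moreover have "inj_on J (block_of ` R)"
    proof (rule inj_onI)
      fix x y assume "J x = J y"
      then have "block_of (J x) = block_of (J y)" by simp
      then show "x = y" by simp
    qed
    ultimately have "(\<Sum>k\<in>R. (cmod (f (J (block_of k))))\<^sup>2) = (\<Sum>m\<in>J ` block_of ` R. (cmod (f m))\<^sup>2)"
      by (simp add: sum.reindex)
    moreover have "(\<Sum>k\<in>F. (cmod (shift f k))\<^sup>2)
        = (\<Sum>k\<in>F. if k = I (block_of k) then (cmod (f (J (block_of k))))\<^sup>2 else 0)"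
      by (rule sum.cong) (auto simp: shift_def)
    moreover have "\<dots> = (\<Sum>k\<in>R. (cmod (f (J (block_of k))))\<^sup>2)"
      unfolding R_def using that by (simp add: sum.inter_filter)
    moreover have "(\<Sum>m\<in>J ` block_of ` R. (cmod (f m))\<^sup>2) \<le> l2sq f"
      by (rule sum_le_l2sq[OF f]) (simp add: R_def that)
    ultimately show ?thesis by (simp add: l2norm_power2)
  qed
  then show "shift f \<in> l2" "l2norm (shift f) \<le> l2norm f"
    using l2norm_le_by_finite_sums[of "shift f" "l2norm f"] l2norm_nonneg[of f] by auto
qed

lemma shift_D_alg: "shift \<in> D_alg block"
  unfolding D_alg_def bounded_op_def
proof (intro CollectI conjI ballI allI)
  show "shift x \<in> l2" if "x \<in> l2" for x using shift_l2(1)[OF that] .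
  show "shift (\<lambda>i. x i + y i) = (\<lambda>i. shift x i + shift y i)" for x y
    by (auto simp: shift_def)
  show "shift (\<lambda>i. c * x i) = (\<lambda>i. c * shift x i)" for x c
    by (auto simp: shift_def)
  show "\<exists>C. \<forall>x\<in>l2. l2norm (shift x) \<le> C * l2norm x"
    using shift_l2(2) by (intro exI[of _ 1]) simp
  fix n x
  show "shift (proj (block n) x) = proj (block n) (shift x)"
  proof
    fix k
    have "J (block_of k) \<in> block n \<longleftrightarrow> k \<in> block n" unfolding mem_block_iff by simp
    then show "shift (proj (block n) x) k = proj (block n) (shift x) k"
      unfolding shift_def proj_def by (simp del: atLeastLessThan_iff)
  qed
qed

lemma tens1_shift_basis_tensor:
  fixes z :: "complex^'m"
  shows "tens1 shift (basis_tensor (J n) z) = basis_tensor (I n) z"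
proof
  fix p :: "nat \<times> 'm"
  obtain k l where p: "p = (k, l)" by (cases p)
  have shifted: "(k = I (block_of k) \<and> J (block_of k) = J n) \<longleftrightarrow> k = I n"
  proof
    assume "k = I (block_of k) \<and> J (block_of k) = J n"
    then have "block_of (J (block_of k)) = block_of (J n)" "k = I (block_of k)" by simp_all
    then show "k = I n" by simp
  qed simp
  have "tens1 shift (basis_tensor (J n) z) (k, l)
      = (if k = I (block_of k) \<and> J (block_of k) = J n then z $ l else 0)"
    by (simp add: tens1_apply shift_def basis_tensor_apply)
  from this[unfolded shifted]
  show "tens1 shift (basis_tensor (J n) z) p = basis_tensor (I n) z p"
    by (simp add: p basis_tensor_apply)
qed

lemma Phi_shift_basis_tensor:
  "Phi u shift (basis_tensor (J n) z) = basis_tensor (I n) ((u (I n) ** cadj (u (J n))) *v z)"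
  by (simp add: Phi_def diag_act_basis_tensor tens1_shift_basis_tensor matrix_vector_mul_assoc)

lemma finite_mnorm_ge_if_compact_Phi_diff_shift:
  fixes u v :: "nat \<Rightarrow> complex^'m^'m"
  assumes u: "\<And>i. unitary_mat (u i)" and v: "\<And>i. unitary_mat (v i)"
    and compact: "compact_op (\<lambda>y p. Phi u shift y p - Phi v shift y p)" and "eps > 0"
  shows "finite {n. eps \<le> mnorm (u (I n) ** cadj (u (J n)) - v (I n) ** cadj (v (J n)))}"
    (is "finite ?S")
proof -
  define D where "D n = u (I n) ** cadj (u (J n)) - v (I n) ** cadj (v (J n))" for n
  have "\<exists>z. norm z = 1 \<and> eps / 2 < norm (D n *v z)" if "n \<in> ?S" for n
    using exists_unit_vector_norm_gt[OF \<open>eps > 0\<close>] that by (simp add: D_def) blast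
  then obtain z where z: "\<And>n. n \<in> ?S \<Longrightarrow> norm (z n) = 1"
    "\<And>n. n \<in> ?S \<Longrightarrow> eps / 2 < norm (D n *v z n)"
    using bchoice[of ?S "\<lambda>n z. norm z = 1 \<and> eps / 2 < norm (D n *v z)"] by blast
  define K where "K = (\<lambda>y p. Phi u shift y p - Phi v shift y p)"
  have K: "K (basis_tensor (J n) (z n)) = basis_tensor (I n) (D n *v z n)" for n
    by (auto simp: K_def D_def Phi_shift_basis_tensor basis_tensor_apply matrix_vector_mult_diff_rdistrib)
  show ?thesis
  proof (rule compact_op_separated_finite)
    show "compact_op K" unfolding K_def by (rule compact)
    have "bounded_op shift" using shift_D_alg unfolding D_alg_def by blast
    show "K x \<in> l2" if "x \<in> l2" for x
      unfolding K_def
      by (rule l2_diff(1)[OF bounded_op_l2[OF bounded_op_Phi[OF \<open>bounded_op shift\<close> u] that]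
            bounded_op_l2[OF bounded_op_Phi[OF \<open>bounded_op shift\<close> v] that]])
    show "basis_tensor (J n) (z n) \<in> l2" "l2norm (basis_tensor (J n) (z n)) \<le> 1" if "n \<in> ?S" for n
      using basis_tensor_l2[of "J n" "z n"] z(1)[OF that] by simp_all
    show "eps / 2 < l2norm (\<lambda>p. K (basis_tensor (J n) (z n)) p - K (basis_tensor (J n') (z n')) p)"
      if "n \<in> ?S" "n' \<in> ?S" "n \<noteq> n'" for n n'
    proof -
      have "I n \<noteq> I n'"
      proof
        assume "I n = I n'"
        then have "block_of (I n) = block_of (I n')" by simp
        with \<open>n \<noteq> n'\<close> show False by simp
      qed
      from order_less_le_trans[OF z(2)[OF that(1)] norm_le_l2norm_basis_tensor_diff[OF this]]
      show ?thesis unfolding K .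
    qed
  qed (use \<open>eps > 0\<close> in simp)
qed

end

lemma infinite_ge_if_not_tendsto_0:
  fixes f :: "nat \<Rightarrow> real"
  assumes "\<And>n. f n \<ge> 0" "\<not> f \<longlonglongrightarrow> 0"
  obtains eps where "eps > 0" "infinite {n. eps \<le> f n}"
proof -
  obtain eps where "eps > 0" "\<forall>N. \<exists>n\<ge>N. eps \<le> f n"
    using assms unfolding LIMSEQ_iff by (auto simp: not_less)
  then show ?thesis using that unfolding infinite_nat_iff_unbounded_le by auto
qed

context interval_partition
begin

lemma Delta_attaining_block_pairsE:
  fixes u v :: "nat \<Rightarrow> complex^'m^'m"
  obtains I J where "block_pairs a I J"
    "\<And>n. Delta (block n) u v = mnorm (u (I n) ** cadj (u (J n)) - v (I n) ** cadj (v (J n)))"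
proof -
  define P where "P n ij \<longleftrightarrow> fst ij \<in> block n \<and> snd ij \<in> block n \<and>
    Delta (block n) u v = mnorm (u (fst ij) ** cadj (u (snd ij)) - v (fst ij) ** cadj (v (snd ij)))"
    for n ij
  have "\<exists>ij. P n ij" for n
  proof -
    have "finite (block n)" "block n \<noteq> {}" using a_mem_block[of n] by auto
    then obtain i j where "i \<in> block n" "j \<in> block n"
      "Delta (block n) u v = mnorm (u i ** cadj (u j) - v i ** cadj (v j))"
      by (rule Delta_attained)
    then show ?thesis unfolding P_def by (intro exI[of _ "(i, j)"]) simp
  qed
  then obtain IJ where IJ: "\<And>n. P n (IJ n)" using choice[of P] by blast
  have "block_pairs a (\<lambda>n. fst (IJ n)) (\<lambda>n. snd (IJ n))"
    by unfold_locales (use IJ in \<open>simp_all add: P_def\<close>)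
  then show ?thesis using that IJ unfolding P_def by blast
qed

lemma Delta_tendsto_if_compact_Phi_diff:
  fixes u v :: "nat \<Rightarrow> complex^'m^'m"
  assumes u: "\<And>i. unitary_mat (u i)" and v: "\<And>i. unitary_mat (v i)"
    and compact: "\<And>T. T \<in> D_alg block \<Longrightarrow> compact_op (\<lambda>y p. Phi u T y p - Phi v T y p)"
  shows "(\<lambda>n. Delta (block n) u v) \<longlonglongrightarrow> 0"
proof (rule ccontr)
  assume "\<not> (\<lambda>n. Delta (block n) u v) \<longlonglongrightarrow> 0"
  with infinite_ge_if_not_tendsto_0[of "\<lambda>n. Delta (block n) u v"] Delta_block_nonneg
  obtain eps where "eps > 0" and infinite: "infinite {n. eps \<le> Delta (block n) u v}" by blast
  obtain I J where "block_pairs a I J" and Delta: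
    "\<And>n. Delta (block n) u v = mnorm (u (I n) ** cadj (u (J n)) - v (I n) ** cadj (v (J n)))"
    using Delta_attaining_block_pairsE[where u=u and v=v] by blast
  interpret block_pairs a I J by fact
  have "finite {n. eps \<le> Delta (block n) u v}"
    unfolding Delta
    by (rule finite_mnorm_ge_if_compact_Phi_diff_shift[OF u v compact[OF shift_D_alg] \<open>eps > 0\<close>])
  with infinite show False by contradiction
qed

lemma compact_Phi_diff_iff_Delta_tendsto:
  fixes u v :: "nat \<Rightarrow> complex^'m^'m"
  assumes "\<And>i. unitary_mat (u i)" "\<And>i. unitary_mat (v i)"
  shows "(\<forall>T\<in>D_alg block. compact_op (\<lambda>y p. Phi u T y p - Phi v T y p))
    \<longleftrightarrow> (\<lambda>n. Delta (block n) u v) \<longlonglongrightarrow> 0"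
  using Delta_tendsto_if_compact_Phi_diff[where u=u and v=v]
    compact_Phi_diff_if_Delta_tendsto[where u=u and v=v] assms
  by blast

end

lemma limsup_ereal_eq_0_iff:
  fixes f :: "nat \<Rightarrow> real"
  assumes "\<And>n. f n \<ge> 0"
  shows "limsup (\<lambda>n. ereal (f n)) = 0 \<longleftrightarrow> f \<longlonglongrightarrow> 0"
proof
  assume "f \<longlonglongrightarrow> 0"
  then have "(\<lambda>n. ereal (f n)) \<longlonglongrightarrow> ereal 0" by simp
  then have "limsup (\<lambda>n. ereal (f n)) = ereal 0"
    by (rule lim_imp_Limsup[OF trivial_limit_sequentially])
  then show "limsup (\<lambda>n. ereal (f n)) = 0" by (simp add: zero_ereal_def)
next
  assume limsup: "limsup (\<lambda>n. ereal (f n)) = 0"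
  have "0 \<le> liminf (\<lambda>n. ereal (f n))" by (rule Liminf_bounded) (simp add: assms)
  then have "liminf (\<lambda>n. ereal (f n)) = 0"
    using Liminf_le_Limsup[OF trivial_limit_sequentially, of "\<lambda>n. ereal (f n)"] limsup by simp
  then have "(\<lambda>n. ereal (f n)) \<longlonglongrightarrow> 0"
    by (rule Liminf_eq_Limsup[OF trivial_limit_sequentially _ limsup])
  then show "f \<longlonglongrightarrow> 0" by (simp add: zero_ereal_def)
qed

theorem lemma4p3:
  fixes u v :: "nat \<Rightarrow> complex^'m^'m"
  assumes "\<And>i. unitary_mat (u i)" and "\<And>i. unitary_mat (v i)"
  shows "((\<lambda>i. mnorm (u i - v i)) \<longlonglongrightarrow> 0 \<longrightarrow>
           (\<forall>T. bounded_op T \<longrightarrow> compact_op (\<lambda>y p. Phi u T y p - Phi v T y p)))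
       \<and> (\<forall>E\<in>Part_N.
           (\<forall>a\<in>D_alg E. compact_op (\<lambda>y p. Phi u a y p - Phi v a y p))
           \<longleftrightarrow> limsup (\<lambda>n. ereal (Delta (E n) u v)) = 0)"
proof (intro conjI impI allI ballI)
  show "compact_op (\<lambda>y p. Phi u T y p - Phi v T y p)"
    if "(\<lambda>i. mnorm (u i - v i)) \<longlonglongrightarrow> 0" "bounded_op T" for T
    by (rule compact_Phi_diff[OF mnorm_unitary_le[OF assms(1)] mnorm_unitary_le[OF assms(2)] that])
  fix E assume "E \<in> Part_N"
  then obtain a where "interval_partition a" and E: "E = (\<lambda>n. {a n..<a (Suc n)})"
    unfolding Part_N_def interval_partition_def by auto
  interpret interval_partition a by fact
  have "limsup (\<lambda>n. ereal (Delta (E n) u v)) = 0 \<longleftrightarrow> (\<lambda>n. Delta (block n) u v) \<longlonglongrightarrow> 0"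
    unfolding E by (rule limsup_ereal_eq_0_iff[OF Delta_block_nonneg])
  then show "(\<forall>T\<in>D_alg E. compact_op (\<lambda>y p. Phi u T y p - Phi v T y p))
      \<longleftrightarrow> limsup (\<lambda>n. ereal (Delta (E n) u v)) = 0"
    unfolding E using compact_Phi_diff_iff_Delta_tendsto[where u=u and v=v] assms by simp
qed

end
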